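(* Let $K$ be a number field with ring of integers $R$, and let $S$ be an order in a quadratic extension $L$ of $K$. Then $$\big|S^\times_{N=1}/S^{\times3}_{N=1}\big|=\frac{|S^\times/S^{\times3}|}{|R^\times/R^{\times3}|},$$ where $S^\times_{N=1}$ is the group of units of $S$ of norm $1$ (norm $N_{L/K}$) and $G^{\times3}$ denotes the subgroup of cubes of a group $G$.
   Context: An order in $L$ is a subring of $L$ containing $R$ that is a finitely generated $R$-module of rank $2$. *)

theory Defs
  imports "HOL-Computational_Algebra.Polynomial" Complex_Main
begin

text \<open>All number fields are considered as subfields of the complex numbers
  (every number field and every finite extension of it embeds into C).\<close>

definition is_subfield :: "complex set \<Rightarrow> bool" where
  "is_subfield F \<longleftrightarrow> 0 \<in> F \<and> 1 \<in> F \<and>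
     (\<forall>x\<in>F. \<forall>y\<in>F. x + y \<in> F \<and> x - y \<in> F \<and> x * y \<in> F) \<and>
     (\<forall>x\<in>F. x \<noteq> 0 \<longrightarrow> inverse x \<in> F)"

definition is_subring :: "complex set \<Rightarrow> bool" where
  "is_subring A \<longleftrightarrow> 0 \<in> A \<and> 1 \<in> A \<and>
     (\<forall>x\<in>A. \<forall>y\<in>A. x + y \<in> A \<and> x - y \<in> A \<and> x * y \<in> A)"

definition number_field :: "complex set \<Rightarrow> bool" where
  "number_field K \<longleftrightarrow> is_subfield K \<and>
     (\<exists>B. finite B \<and> B \<subseteq> K \<and>
        (\<forall>x\<in>K. \<exists>c. (\<forall>b\<in>B. c b \<in> \<rat>) \<and> x = (\<Sum>b\<in>B. c b * b)))"

definition ring_of_integers :: "complex set \<Rightarrow> complex set" where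
  "ring_of_integers K = {x \<in> K. algebraic_int x}"

definition is_basis2 :: "complex set \<Rightarrow> complex set \<Rightarrow> complex \<Rightarrow> complex \<Rightarrow> bool" where
  "is_basis2 K L a b \<longleftrightarrow> a \<in> L \<and> b \<in> L \<and>
     (\<forall>x\<in>L. \<exists>!uv. fst uv \<in> K \<and> snd uv \<in> K \<and> x = fst uv * a + snd uv * b)"

definition quadratic_extension :: "complex set \<Rightarrow> complex set \<Rightarrow> bool" where
  "quadratic_extension K L \<longleftrightarrow> is_subfield L \<and> K \<subseteq> L \<and> (\<exists>a b. is_basis2 K L a b)"

definition coords2 :: "complex set \<Rightarrow> complex \<Rightarrow> complex \<Rightarrow> complex \<Rightarrow> complex \<times> complex" where
  "coords2 K a b x = (THE uv. fst uv \<in> K \<and> snd uv \<in> K \<and> x = fst uv * a + snd uv * b)"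

text \<open>Relative norm N_{L/K}(x): determinant of the K-linear map y \<mapsto> x y on L,
  computed in any K-basis (a, b) of L (independent of the basis).\<close>
definition rel_norm :: "complex set \<Rightarrow> complex set \<Rightarrow> complex \<Rightarrow> complex" where
  "rel_norm K L x = (THE n. \<forall>a b. is_basis2 K L a b \<longrightarrow>
      n = fst (coords2 K a b (x * a)) * snd (coords2 K a b (x * b))
        - fst (coords2 K a b (x * b)) * snd (coords2 K a b (x * a)))"

definition lin_indep_over :: "complex set \<Rightarrow> complex list \<Rightarrow> bool" where
  "lin_indep_over A xs \<longleftrightarrow>
     (\<forall>c. (\<forall>i<length xs. c i \<in> A) \<longrightarrow> (\<Sum>i<length xs. c i * xs ! i) = 0 \<longrightarrow>
        (\<forall>i<length xs. c i = 0))"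

definition is_order :: "complex set \<Rightarrow> complex set \<Rightarrow> complex set \<Rightarrow> bool" where
  "is_order R L S \<longleftrightarrow> is_subring S \<and> S \<subseteq> L \<and> R \<subseteq> S \<and>
     (\<exists>G. finite G \<and> G \<subseteq> S \<and>
        S = {\<Sum>g\<in>G. r g * g | r. \<forall>g\<in>G. r g \<in> R}) \<and>
     (\<exists>a b. a \<in> S \<and> b \<in> S \<and> lin_indep_over R [a, b]) \<and>
     (\<forall>a b c. a \<in> S \<longrightarrow> b \<in> S \<longrightarrow> c \<in> S \<longrightarrow> \<not> lin_indep_over R [a, b, c])"

definition units_of_set :: "complex set \<Rightarrow> complex set" where
  "units_of_set A = {u \<in> A. u \<noteq> 0 \<and> inverse u \<in> A}"

definition cubes :: "complex set \<Rightarrow> complex set" where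
  "cubes G = {u ^ 3 | u. u \<in> G}"

definition quot :: "complex set \<Rightarrow> complex set \<Rightarrow> complex set set" where
  "quot G H = {(\<lambda>h. g * h) ` H | g. g \<in> G}"

end

(*
  Let U_S and U_R be the unit groups of S and R, and A the group of units of S of norm 1. The
  norm N maps U_S into U_R and restricts to squaring on U_R. Therefore u |-> (u^2 / N(u), N(u))
  induces an isomorphism of U_S/U_S^3 onto A/A^3 x U_R/U_R^3, with inverse (a, r) |-> a^2 r^2:
  as 4 = 1 mod 3, the cube class of u is determined by u^4 = (u^2 / N(u))^2 N(u)^2.

  Dividing by |U_R/U_R^3| requires this index to be finite. The embeddings of K into C are the
  common eigenvalues of the commuting multiplication matrices of K over Q. The logarithmic
  embedding maps U_R into a finite-dimensional real space, so modulo cubes every unit has a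
  representative all of whose conjugates are bounded; and an algebraic integer of K with bounded
  conjugates is a root of one of finitely many monic integer polynomials, its characteristic
  polynomial.
*)

theory Submission
  imports Defs "Jordan_Normal_Form.Char_Poly" "HOL-Library.Function_Algebras"
begin

section \<open>Algebraic integers\<close>

lemma char_poly_root_of_eigenvector:
  fixes f :: "nat \<Rightarrow> nat \<Rightarrow> 'a::field" and v :: "nat \<Rightarrow> 'a"
  assumes "\<forall>i<n. (\<Sum>j<n. f i j * v j) = l * v i" and "i0 < n" "v i0 \<noteq> 0"
  shows "poly (char_poly (mat n n (\<lambda>(i,j). f i j))) l = 0"
proof -
  let ?A = "mat n n (\<lambda>(i,j). f i j)"
  let ?v = "vec n v"
  have A: "?A \<in> carrier_mat n n" by simp
  have "eigenvector ?A ?v l"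
    unfolding eigenvector_def
  proof (intro conjI)
    show "?v \<in> carrier_vec (dim_row ?A)" by simp
    show "?v \<noteq> 0\<^sub>v (dim_row ?A)" using assms(2,3)
      by (metis dim_row_mat(1) index_vec index_zero_vec(1))
    show "?A *\<^sub>v ?v = l \<cdot>\<^sub>v ?v"
      by (rule eq_vecI) (auto simp: scalar_prod_def assms(1) atLeast0LessThan)
  qed
  hence "eigenvalue ?A l" unfolding eigenvalue_def by blast
  thus ?thesis using eigenvalue_root_char_poly[OF A] by simp
qed

lemma eigenvector_of_char_poly_root:
  fixes f :: "nat \<Rightarrow> nat \<Rightarrow> 'a::field"
  assumes "poly (char_poly (mat n n (\<lambda>(i,j). f i j))) l = 0"
  shows "\<exists>v. (\<exists>i<n. v i \<noteq> 0) \<and> (\<forall>i<n. (\<Sum>j<n. f i j * v j) = l * v i)"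
proof -
  let ?A = "mat n n (\<lambda>(i,j). f i j)"
  have A: "?A \<in> carrier_mat n n" by simp
  have "eigenvalue ?A l" using eigenvalue_root_char_poly[OF A] assms by simp
  then obtain w where w: "eigenvector ?A w l" unfolding eigenvalue_def by blast
  hence wc: "w \<in> carrier_vec n" and wn: "w \<noteq> 0\<^sub>v n" and we: "?A *\<^sub>v w = l \<cdot>\<^sub>v w"
    unfolding eigenvector_def by auto
  obtain i where i: "i < n" "w $ i \<noteq> 0" using wc wn by (metis eq_vecI carrier_vecD index_zero_vec(1,2))
  show ?thesis
  proof (intro exI[of _ "\<lambda>i. w $ i"] conjI)
    show "\<exists>i<n. w $ i \<noteq> 0" using i by blast
    show "\<forall>i<n. (\<Sum>j<n. f i j * w $ j) = l * w $ i"
    proof (intro allI impI)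
      fix i assume i: "i < n"
      have "(?A *\<^sub>v w) $ i = (l \<cdot>\<^sub>v w) $ i" using we by simp
      thus "(\<Sum>j<n. f i j * w $ j) = l * w $ i" using i wc
        by (auto simp: scalar_prod_def atLeast0LessThan)
    qed
  qed
qed

lemma char_poly_mat_monic:
  "degree (char_poly (mat n n (\<lambda>(i,j). f i j))) = n \<and> coeff (char_poly (mat n n (\<lambda>(i,j). f i j))) n = 1"
  by (rule degree_monic_char_poly) simp

lemma char_poly_mat_of_int:
  "char_poly (mat n n (\<lambda>(i,j). of_int (f i j) :: 'a :: {comm_ring_1,ring_char_0})) = map_poly of_int (char_poly (mat n n (\<lambda>(i,j). f i j)))"
proof -
  have "mat n n (\<lambda>(i,j). of_int (f i j) :: 'a) = map_mat of_int (mat n n (\<lambda>(i,j). f i j))"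
    by (rule eq_matI) auto
  thus ?thesis using of_int_hom.char_poly_hom[of "mat n n (\<lambda>(i,j). f i j)" n] by simp
qed

definition int_span :: "complex set \<Rightarrow> complex set" where
  "int_span W = {\<Sum>w\<in>W. of_int (c w) * w | c. True}"

lemma int_spanI: "x = (\<Sum>w\<in>W. of_int (c w) * w) \<Longrightarrow> x \<in> int_span W"
  unfolding int_span_def by blast

lemma int_span_0: "0 \<in> int_span W"
  unfolding int_span_def by (rule CollectI, rule exI[of _ "\<lambda>_. 0"]) simp

lemma int_span_base: assumes "finite W" "x \<in> W" shows "x \<in> int_span W"
proof -
  have eq: "\<And>w. of_int (if w = x then 1 else 0) * w = (if w = x then w else 0)" by simp
  have "(\<Sum>w\<in>W. of_int (if w = x then 1 else 0) * w) = x"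
    unfolding eq using assms by (simp add: sum.delta')
  thus ?thesis by (rule sym[THEN int_spanI])
qed

lemma int_span_add: assumes "x \<in> int_span W" "y \<in> int_span W" shows "x + y \<in> int_span W"
proof -
  obtain c d where "x = (\<Sum>w\<in>W. of_int (c w) * w)" "y = (\<Sum>w\<in>W. of_int (d w) * w)"
    using assms unfolding int_span_def by blast
  hence "x + y = (\<Sum>w\<in>W. of_int (c w + d w) * w)"
    by (simp add: sum.distrib distrib_right)
  thus ?thesis by (rule int_spanI)
qed

lemma int_span_int_mult: assumes "x \<in> int_span W" shows "of_int k * x \<in> int_span W"
proof -
  obtain c where "x = (\<Sum>w\<in>W. of_int (c w) * w)"
    using assms unfolding int_span_def by blast
  hence "of_int k * x = (\<Sum>w\<in>W. of_int (k * c w) * w)"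
    by (simp add: sum_distrib_left mult.assoc)
  thus ?thesis by (rule int_spanI)
qed

lemma int_span_uminus: assumes "x \<in> int_span W" shows "- x \<in> int_span W"
  using int_span_int_mult[OF assms, of "-1"] by simp

lemma int_span_sum: assumes "\<And>i. i \<in> I \<Longrightarrow> f i \<in> int_span W" shows "sum f I \<in> int_span W"
  using assms
proof (induction I rule: infinite_finite_induct)
  case (insert x F) thus ?case by (simp add: int_span_add)
qed (auto simp: int_span_0)

lemma int_span_mult:
  assumes "finite W" "finite G" "x \<in> int_span W" "y \<in> int_span G"
  shows "x * y \<in> int_span {w * g | w g. w \<in> W \<and> g \<in> G}"
proof -
  let ?T = "{w * g | w g. w \<in> W \<and> g \<in> G}"
  have fT: "finite ?T" using assms(1,2) by (simp add: finite_image_set2)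
  obtain c where c: "x = (\<Sum>w\<in>W. of_int (c w) * w)"
    using assms unfolding int_span_def by blast
  obtain d where d: "y = (\<Sum>g\<in>G. of_int (d g) * g)"
    using assms unfolding int_span_def by blast
  have "x * y = (\<Sum>w\<in>W. \<Sum>g\<in>G. of_int (c w * d g) * (w * g))"
    unfolding c d sum_product by (simp add: algebra_simps)
  also have "\<dots> \<in> int_span ?T"
    by (intro int_span_sum int_span_int_mult int_span_base[OF fT]) blast
  finally show ?thesis .
qed

lemma int_span_mult_int:
  assumes "finite W" "x \<in> int_span W" "\<And>w. w \<in> W \<Longrightarrow> l * w \<in> int_span W"
  shows "l * x \<in> int_span W"
proof -
  obtain c where c: "x = (\<Sum>w\<in>W. of_int (c w) * w)"
    using assms unfolding int_span_def by blast
  have "l * x = (\<Sum>w\<in>W. of_int (c w) * (l * w))"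
    unfolding c sum_distrib_left by (simp add: algebra_simps)
  also have "\<dots> \<in> int_span W" by (intro int_span_sum int_span_int_mult assms(3))
  finally show ?thesis .
qed

lemma algebraic_int_of_int_span_invariant:
  assumes fin: "finite W" and w0: "w0 \<in> W" "w0 \<noteq> 0"
    and cl: "\<And>w. w \<in> W \<Longrightarrow> l * w \<in> int_span W"
  shows "algebraic_int l"
proof -
  obtain ws where ws: "set ws = W" "distinct ws" using finite_distinct_list[OF fin] by blast
  define n where "n = length ws"
  have sumW: "(\<Sum>w\<in>W. h w) = (\<Sum>j<n. h (ws ! j))" for h :: "complex \<Rightarrow> complex"
  proof -
    have "(\<Sum>w\<in>W. h w) = sum_list (map h ws)" using ws by (simp add: sum_list_distinct_conv_sum_set)
    also have "\<dots> = (\<Sum>j<n. h (ws ! j))" unfolding n_def by (simp add: sum_list_sum_nth atLeast0LessThan)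
    finally show ?thesis .
  qed
  have "\<forall>i. \<exists>c. i < n \<longrightarrow> l * ws ! i = (\<Sum>w\<in>W. of_int (c w) * w)"
  proof
    fix i show "\<exists>c. i < n \<longrightarrow> l * ws ! i = (\<Sum>w\<in>W. of_int (c w) * w)"
    proof (cases "i < n")
      case True
      hence "ws ! i \<in> W" using ws n_def by auto
      then show ?thesis using cl unfolding int_span_def by blast
    qed simp
  qed
  then obtain c where c: "\<And>i. i < n \<Longrightarrow> l * ws ! i = (\<Sum>w\<in>W. of_int (c i w) * w)" by metis
  obtain i0 where i0: "i0 < n" "ws ! i0 = w0" using w0 ws n_def by (metis in_set_conv_nth)
  have "poly (char_poly (mat n n (\<lambda>(i,j). of_int (c i (ws ! j)) :: complex))) l = 0"
    by (rule char_poly_root_of_eigenvector[of n _ "\<lambda>j. ws ! j" _ i0]) (use c sumW i0 w0 in auto)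
  moreover have "char_poly (mat n n (\<lambda>(i,j). of_int (c i (ws ! j)) :: complex)) = map_poly of_int (char_poly (mat n n (\<lambda>(i,j). c i (ws ! j))))"
    by (rule char_poly_mat_of_int)
  ultimately have "poly (map_poly of_int (char_poly (mat n n (\<lambda>(i,j). c i (ws ! j))))) l = 0"
    by simp
  moreover have "lead_coeff (char_poly (mat n n (\<lambda>(i,j). c i (ws ! j)))) = 1"
    using char_poly_mat_monic[of n "\<lambda>i j. c i (ws ! j)"] by simp
  ultimately show ?thesis unfolding algebraic_int_altdef_ipoly by blast
qed

lemma algebraic_int_power_in_int_span:
  assumes "algebraic_int (r::complex)"
  shows "\<exists>d>0. r ^ d \<in> int_span {r ^ i | i. i < d}"
proof -
  obtain p where p: "lead_coeff p = 1" "\<forall>i. coeff p i \<in> \<int>" "poly p r = 0"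
    using assms by (auto elim: algebraic_int.cases)
  define d where "d = degree p"
  have d0: "d > 0"
  proof (rule ccontr)
    assume "\<not> d > 0" hence "degree p = 0" using d_def by simp
    hence "poly p r = (\<Sum>i\<le>0. coeff p i * r ^ i)" unfolding poly_altdef by simp
    also have "\<dots> = 1" using p(1) \<open>degree p = 0\<close> by simp
    finally show False using p(3) by simp
  qed
  let ?P = "{r ^ i | i. i < d}"
  have fP: "finite ?P" by simp
  have "0 = (\<Sum>i\<le>d. coeff p i * r ^ i)" using p(3) unfolding poly_altdef d_def by simp
  also have "\<dots> = (\<Sum>i<d. coeff p i * r ^ i) + r ^ d"
    using p(1) unfolding d_def by (simp add: lessThan_Suc_atMost[symmetric])
  finally have eq: "r ^ d = - (\<Sum>i<d. coeff p i * r ^ i)" by (simp add: eq_neg_iff_add_eq_0 add.commute)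
  have "(\<Sum>i<d. coeff p i * r ^ i) \<in> int_span ?P"
  proof (rule int_span_sum)
    fix i assume i: "i \<in> {..<d}"
    obtain m where m: "coeff p i = of_int m" using p(2) by (meson Ints_cases)
    show "coeff p i * r ^ i \<in> int_span ?P" unfolding m
      by (rule int_span_int_mult, rule int_span_base[OF fP]) (use i in auto)
  qed
  hence "r ^ d \<in> int_span ?P" unfolding eq by (rule int_span_uminus)
  thus ?thesis using d0 by blast
qed

lemma algebraic_ints_common_module:
  assumes "finite X" "\<forall>x\<in>X. algebraic_int (x::complex)"
  shows "\<exists>W. finite W \<and> 1 \<in> W \<and> (\<forall>x\<in>X. \<forall>w\<in>W. x * w \<in> int_span W)"
  using assms
proof (induction X rule: finite_induct)
  case empty
  show ?case by (rule exI[of _ "{1}"]) simp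
next
  case (insert r X)
  then obtain W where W: "finite W" "1 \<in> W" "\<forall>x\<in>X. \<forall>w\<in>W. x * w \<in> int_span W" by auto
  obtain d where d: "d > 0" "r ^ d \<in> int_span {r ^ i | i. i < d}"
    using algebraic_int_power_in_int_span[of r] insert.prems by blast
  let ?P = "{r ^ i | i. i < d}"
  let ?W = "{w * q | w q. w \<in> W \<and> q \<in> ?P}"
  have fP: "finite ?P" by simp
  have fW: "finite ?W" using W(1) fP by (simp add: finite_image_set2)
  have memW: "w * r ^ i \<in> ?W" if "w \<in> W" "i < d" for w i using that by blast
  have "1 \<in> ?W" using memW[OF W(2) d(1)] by simp
  moreover have "\<forall>x\<in>insert r X. \<forall>w\<in>?W. x * w \<in> int_span ?W"
  proof (intro ballI)
    fix x w' assume x: "x \<in> insert r X" and w': "w' \<in> ?W"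
    then obtain w i where wi: "w \<in> W" "i < d" "w' = w * r ^ i" by blast
    show "x * w' \<in> int_span ?W"
    proof (cases "x = r")
      case True
      show ?thesis
      proof (cases "Suc i < d")
        case True
        have "x * w' = w * r ^ Suc i" using wi \<open>x = r\<close> by (simp add: algebra_simps)
        thus ?thesis using memW[OF wi(1) True] int_span_base[OF fW] by simp
      next
        case False
        hence "Suc i = d" using wi by simp
        hence "x * w' = w * r ^ d" using wi \<open>x = r\<close> by (auto simp: algebra_simps)
        thus ?thesis using int_span_mult[OF W(1) fP int_span_base[OF W(1) wi(1)] d(2)] by simp
      qed
    next
      case False
      hence "x \<in> X" using x by simp
      hence "x * w \<in> int_span W" using W(3) wi by blast
      moreover have "r ^ i \<in> int_span ?P" by (rule int_span_base[OF fP]) (use wi in blast)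
      ultimately have "(x * w) * r ^ i \<in> int_span ?W" using int_span_mult[OF W(1) fP] by blast
      thus ?thesis using wi by (simp add: mult.assoc)
    qed
  qed
  ultimately show ?case using fW by blast
qed

lemma algebraic_int_add_mult:
  assumes "algebraic_int (x::complex)" "algebraic_int y"
  shows "algebraic_int (x + y)" "algebraic_int (x * y)"
proof -
  have "\<exists>W. finite W \<and> 1 \<in> W \<and> (\<forall>z\<in>{x,y}. \<forall>w\<in>W. z * w \<in> int_span W)"
    by (rule algebraic_ints_common_module) (use assms in auto)
  then obtain W where W: "finite W" "1 \<in> W" "\<forall>z\<in>{x,y}. \<forall>w\<in>W. z * w \<in> int_span W"
    by blast
  show "algebraic_int (x + y)"
  proof (rule algebraic_int_of_int_span_invariant[OF W(1,2)])
    fix w assume "w \<in> W"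
    hence "x * w \<in> int_span W" "y * w \<in> int_span W" using W(3) by auto
    hence "x * w + y * w \<in> int_span W" by (rule int_span_add)
    thus "(x + y) * w \<in> int_span W" by (simp add: distrib_right)
  qed simp
  show "algebraic_int (x * y)"
  proof (rule algebraic_int_of_int_span_invariant[OF W(1,2)])
    fix w assume "w \<in> W"
    hence "y * w \<in> int_span W" using W(3) by auto
    moreover have "\<And>w. w \<in> W \<Longrightarrow> x * w \<in> int_span W" using W(3) by blast
    ultimately have "x * (y * w) \<in> int_span W" by (rule int_span_mult_int[OF W(1)])
    thus "x * y * w \<in> int_span W" by (simp add: mult.assoc)
  qed simp
qed

lemma algebraic_int_add: "algebraic_int (x::complex) \<Longrightarrow> algebraic_int y \<Longrightarrow> algebraic_int (x + y)"
  using algebraic_int_add_mult by blast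
lemma algebraic_int_mult: "algebraic_int (x::complex) \<Longrightarrow> algebraic_int y \<Longrightarrow> algebraic_int (x * y)"
  using algebraic_int_add_mult by blast
lemma algebraic_int_diff: "algebraic_int (x::complex) \<Longrightarrow> algebraic_int y \<Longrightarrow> algebraic_int (x - y)"
  using algebraic_int_add[of x "-y"] by auto
lemma algebraic_int_power: "algebraic_int (x::complex) \<Longrightarrow> algebraic_int (x ^ n)"
  by (induction n) (auto intro: algebraic_int_mult)

lemma algebraic_int_coeff_prod_linear:
  assumes "\<forall>a\<in>set as. algebraic_int (a::complex)"
  shows "algebraic_int (coeff (\<Prod>a\<leftarrow>as. [:- a, 1:]) k)"
  using assms
proof (induction as arbitrary: k)
  case Nil thus ?case by (cases k) auto
next
  case (Cons a as)
  have "(\<Prod>a\<leftarrow>a # as. [:- a, 1:]) = [:- a, 1:] * (\<Prod>a\<leftarrow>as. [:- a, 1:])" by simp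
  also have "\<dots> = pCons 0 (\<Prod>a\<leftarrow>as. [:- a, 1:]) - Polynomial.smult a (\<Prod>a\<leftarrow>as. [:- a, 1:])"
    by (simp add: mult_pCons_left pCons_one)
  finally have eq: "(\<Prod>a\<leftarrow>a # as. [:- a, 1:]) = \<dots>" .
  define P where "P = (\<Prod>a\<leftarrow>as. [:- a, 1:])"
  have IH: "algebraic_int (coeff P j)" for j unfolding P_def using Cons by simp
  have "coeff (pCons 0 P - Polynomial.smult a P) k = (case k of 0 \<Rightarrow> 0 | Suc j \<Rightarrow> coeff P j) - a * coeff P k"
    by (cases k) auto
  moreover have "algebraic_int (case k of 0 \<Rightarrow> 0 | Suc j \<Rightarrow> coeff P j)" using IH by (cases k) auto
  moreover have "algebraic_int a" using Cons by simp
  ultimately show ?case unfolding eq P_def[symmetric] using IH by (metis algebraic_int_diff algebraic_int_mult)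
qed

lemma algebraic_int_of_finite_module:
  fixes G S :: "complex set" and u :: complex
  assumes fG: "finite G" and gen: "\<And>x. x \<in> S \<Longrightarrow> \<exists>r. (\<forall>g\<in>G. algebraic_int (r g)) \<and> x = (\<Sum>g\<in>G. r g * g)"
    and one: "1 \<in> S" and GS: "G \<subseteq> S" and closed: "\<And>x y. x \<in> S \<Longrightarrow> y \<in> S \<Longrightarrow> x * y \<in> S"
    and u: "u \<in> S"
  shows "algebraic_int u"
proof -
  have "\<forall>g. \<exists>r. g \<in> G \<longrightarrow> (\<forall>g'\<in>G. algebraic_int (r g')) \<and> u * g = (\<Sum>g'\<in>G. r g' * g')"
    using gen closed u GS by blast
  then obtain rr where rr: "\<And>g. g \<in> G \<Longrightarrow> (\<forall>g'\<in>G. algebraic_int (rr g g')) \<and> u * g = (\<Sum>g'\<in>G. rr g g' * g')"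
    by metis
  define X where "X = (\<lambda>(g,g'). rr g g') ` (G \<times> G)"
  have "\<exists>W. finite W \<and> 1 \<in> W \<and> (\<forall>x\<in>X. \<forall>w\<in>W. x * w \<in> int_span W)"
    by (rule algebraic_ints_common_module) (use fG rr in \<open>auto simp: X_def\<close>)
  then obtain W where W: "finite W" "1 \<in> W" "\<And>x w. x \<in> X \<Longrightarrow> w \<in> W \<Longrightarrow> x * w \<in> int_span W"
    by blast
  let ?T = "{w * g | w g. w \<in> W \<and> g \<in> G}"
  have fT: "finite ?T" using W(1) fG by (simp add: finite_image_set2)
  obtain r1 where r1: "1 = (\<Sum>g\<in>G. r1 g * g)" using gen[OF one] by blast
  obtain g0 where g0: "g0 \<in> G" "g0 \<noteq> 0"
  proof (rule ccontr)
    assume "\<not> thesis"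
    hence "\<forall>g\<in>G. g = 0" using that by blast
    hence "(\<Sum>g\<in>G. r1 g * g) = 0" by (intro sum.neutral) simp
    thus False using r1 by simp
  qed
  show ?thesis
  proof (rule algebraic_int_of_int_span_invariant[OF fT])
    show "1 * g0 \<in> ?T" using W(2) g0 by blast
    show "1 * g0 \<noteq> 0" using g0 by simp
  next
    fix t assume "t \<in> ?T"
    then obtain w g where wg: "w \<in> W" "g \<in> G" "t = w * g" by blast
    have ug: "u * g = (\<Sum>g'\<in>G. rr g g' * g')" using rr[OF wg(2)] by blast
    have "u * t = w * (u * g)" using wg(3) by (simp add: algebra_simps)
    also have "\<dots> = (\<Sum>g'\<in>G. (rr g g' * w) * g')"
      unfolding ug sum_distrib_left by (simp add: algebra_simps)
    also have "\<dots> \<in> int_span ?T"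
    proof (rule int_span_sum)
      fix g' assume g': "g' \<in> G"
      have "rr g g' \<in> X" using wg(2) g' unfolding X_def by force
      hence "rr g g' * w \<in> int_span W" using W(3) wg(1) by blast
      thus "rr g g' * w * g' \<in> int_span ?T" using int_span_mult[OF W(1) fG _ int_span_base[OF fG g']] by blast
    qed
    finally show "u * t \<in> int_span ?T" .
  qed
qed

lemma order_algebraic_int:
  assumes "is_order (ring_of_integers K) L S" "u \<in> S"
  shows "algebraic_int u"
proof -
  from assms(1) obtain G where G: "finite G" "G \<subseteq> S"
    "S = {\<Sum>g\<in>G. r g * g | r. \<forall>g\<in>G. r g \<in> ring_of_integers K}"
    and sr: "is_subring S"
    unfolding is_order_def by blast
  show ?thesis
  proof (rule algebraic_int_of_finite_module[OF G(1) _ _ G(2) _ assms(2)])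
    fix x assume "x \<in> S"
    then obtain r where "x = (\<Sum>g\<in>G. r g * g)" "\<forall>g\<in>G. r g \<in> ring_of_integers K"
      using G(3) by blast
    thus "\<exists>r. (\<forall>g\<in>G. algebraic_int (r g)) \<and> x = (\<Sum>g\<in>G. r g * g)"
      unfolding ring_of_integers_def by blast
  next
    show "1 \<in> S" using sr unfolding is_subring_def by blast
  next
    fix x y assume "x \<in> S" "y \<in> S" thus "x * y \<in> S" using sr unfolding is_subring_def by blast
  qed
qed

section \<open>The relative norm of a quadratic extension\<close>

lemma subfield_0: "is_subfield K \<Longrightarrow> 0 \<in> K" and subfield_1: "is_subfield K \<Longrightarrow> 1 \<in> K"
  unfolding is_subfield_def by auto
lemma subfield_add: "is_subfield K \<Longrightarrow> x \<in> K \<Longrightarrow> y \<in> K \<Longrightarrow> x + y \<in> K"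
  and subfield_diff: "is_subfield K \<Longrightarrow> x \<in> K \<Longrightarrow> y \<in> K \<Longrightarrow> x - y \<in> K"
  and subfield_mult: "is_subfield K \<Longrightarrow> x \<in> K \<Longrightarrow> y \<in> K \<Longrightarrow> x * y \<in> K"
  unfolding is_subfield_def by auto
lemma subfield_inverse: "is_subfield K \<Longrightarrow> x \<in> K \<Longrightarrow> inverse x \<in> K"
  unfolding is_subfield_def by (cases "x = 0") auto
lemma subfield_uminus: "is_subfield K \<Longrightarrow> x \<in> K \<Longrightarrow> - x \<in> K"
  using subfield_diff[of K 0 x] subfield_0 by auto
lemma subfield_divide: "is_subfield K \<Longrightarrow> x \<in> K \<Longrightarrow> y \<in> K \<Longrightarrow> x / y \<in> K"
  by (simp add: divide_inverse subfield_mult subfield_inverse)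
lemma subfield_power: "is_subfield K \<Longrightarrow> x \<in> K \<Longrightarrow> x ^ n \<in> K"
  by (induction n) (auto simp: subfield_1 subfield_mult)
lemma subfield_sum: "is_subfield K \<Longrightarrow> (\<And>i. i \<in> I \<Longrightarrow> f i \<in> K) \<Longrightarrow> sum f I \<in> K"
  by (induction I rule: infinite_finite_induct) (auto simp: subfield_0 subfield_add)
lemma subfield_of_nat: "is_subfield K \<Longrightarrow> of_nat n \<in> K"
  by (induction n) (auto simp: subfield_0 subfield_1 subfield_add)
lemma subfield_of_int: "is_subfield K \<Longrightarrow> of_int k \<in> K"
  by (cases k rule: int_cases) (auto simp: subfield_of_nat subfield_uminus simp del: of_nat_Suc)
lemma subfield_Rats: "is_subfield K \<Longrightarrow> q \<in> \<rat> \<Longrightarrow> q \<in> K"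
  by (auto elim!: Rats_cases' simp: subfield_divide subfield_of_int)

lemma number_field_subfield: "number_field K \<Longrightarrow> is_subfield K"
  unfolding number_field_def by blast

lemma basis2_mem: "is_basis2 K L a b \<Longrightarrow> a \<in> L \<and> b \<in> L"
  unfolding is_basis2_def by auto

lemma basis2_indep:
  assumes "is_basis2 K L a b" "is_subfield K" "is_subfield L" "al \<in> K" "be \<in> K" "al * a + be * b = 0"
  shows "al = 0 \<and> be = 0"
proof -
  have "0 \<in> L" using assms(3) subfield_0 by blast
  then have "\<exists>!uv. fst uv \<in> K \<and> snd uv \<in> K \<and> 0 = fst uv * a + snd uv * b"
    using assms(1) unfolding is_basis2_def by blast
  moreover have "fst (0,0) \<in> K \<and> snd (0,0) \<in> K \<and> (0::complex) = fst (0,0) * a + snd (0,0) * b"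
    using subfield_0[OF assms(2)] by simp
  moreover have "fst (al,be) \<in> K \<and> snd (al,be) \<in> K \<and> (0::complex) = fst (al,be) * a + snd (al,be) * b"
    using assms by simp
  ultimately have "(al, be) = ((0::complex), (0::complex))" by blast
  thus ?thesis by simp
qed

lemma basis2_nonzero:
  assumes "is_basis2 K L a b" "is_subfield K" "is_subfield L"
  shows "a \<noteq> 0" "b \<noteq> 0"
  using basis2_indep[OF assms, of 1 0] basis2_indep[OF assms, of 0 1] subfield_0[OF assms(2)] subfield_1[OF assms(2)]
  by auto

lemma coords2_spec:
  assumes "is_basis2 K L a b" "x \<in> L"
  shows "fst (coords2 K a b x) \<in> K \<and> snd (coords2 K a b x) \<in> K \<and>
         x = fst (coords2 K a b x) * a + snd (coords2 K a b x) * b"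
proof -
  have "\<exists>!uv. fst uv \<in> K \<and> snd uv \<in> K \<and> x = fst uv * a + snd uv * b"
    using assms unfolding is_basis2_def by blast
  from theI'[OF this] show ?thesis unfolding coords2_def .
qed

lemma coords2_eqI:
  assumes "is_basis2 K L a b" "x \<in> L" "al \<in> K" "be \<in> K" "x = al * a + be * b"
  shows "coords2 K a b x = (al, be)"
proof -
  have "\<exists>!uv. fst uv \<in> K \<and> snd uv \<in> K \<and> x = fst uv * a + snd uv * b"
    using assms(1,2) unfolding is_basis2_def by blast
  moreover have "fst (al,be) \<in> K \<and> snd (al,be) \<in> K \<and> x = fst (al,be) * a + snd (al,be) * b"
    using assms by simp
  ultimately show ?thesis unfolding coords2_def by (rule the1_equality)
qed

lemma subfield_powers_linear:
  assumes K: "is_subfield K" and tn: "t \<in> K" "n \<in> K"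
    and x: "x ^ 2 = t * x - n" and y: "y ^ 2 = t * y - n"
  shows "\<exists>A B. A \<in> K \<and> B \<in> K \<and> x ^ k = A * x + B \<and> y ^ k = A * y + B"
proof (induction k)
  case 0
  show ?case by (rule exI[of _ 0], rule exI[of _ 1]) (simp add: subfield_0[OF K] subfield_1[OF K])
next
  case (Suc k)
  then obtain A B where AB: "A \<in> K" "B \<in> K" "x ^ k = A * x + B" "y ^ k = A * y + B" by blast
  have step: "z ^ Suc k = (A * t + B) * z + (- A * n)" if "z ^ 2 = t * z - n" "z ^ k = A * z + B" for z
  proof -
    have "z ^ Suc k = A * z ^ 2 + B * z" using that(2) by (simp add: algebra_simps power2_eq_square)
    also have "\<dots> = (A * t + B) * z + (- A * n)" unfolding that(1) by (simp add: algebra_simps)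
    finally show ?thesis .
  qed
  have "A * t + B \<in> K" "- A * n \<in> K" using AB tn K by (auto simp: subfield_add subfield_mult subfield_uminus)
  then show ?case using step[OF x AB(3)] step[OF y AB(4)] by blast
qed

lemma conjugate_root:
  assumes K: "is_subfield K" and x: "x \<notin> K" and t: "t \<in> K" and q: "x ^ 2 - t * x + n = 0" and n: "n \<in> K"
    and p: "\<forall>i. coeff p i \<in> \<int>" "poly p x = 0"
  shows "poly p (t - x) = 0"
proof -
  define x' where "x' = t - x"
  have "x ^ 2 = t * x - n" using q by (simp add: algebra_simps)
  moreover have "x' ^ 2 = t * x' - n" using q unfolding x'_def by (simp add: algebra_simps power2_eq_square)
  ultimately have "\<exists>A B. A \<in> K \<and> B \<in> K \<and> x ^ k = A * x + B \<and> x' ^ k = A * x' + B" for k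
    using subfield_powers_linear[OF K t n] by blast
  then obtain A B where AB: "\<And>k. A k \<in> K \<and> B k \<in> K \<and> x ^ k = A k * x + B k \<and> x' ^ k = A k * x' + B k"
    by metis
  define SA where "SA = (\<Sum>i\<le>degree p. coeff p i * A i)"
  define SB where "SB = (\<Sum>i\<le>degree p. coeff p i * B i)"
  have cK: "coeff p i \<in> K" for i using p(1) subfield_of_int[OF K] by (metis Ints_cases)
  have SAK: "SA \<in> K" unfolding SA_def using AB cK by (intro subfield_sum[OF K]) (simp add: subfield_mult[OF K])
  have SBK: "SB \<in> K" unfolding SB_def using AB cK by (intro subfield_sum[OF K]) (simp add: subfield_mult[OF K])
  have "poly p x = (\<Sum>i\<le>degree p. coeff p i * (A i * x + B i))"
    unfolding poly_altdef using AB by simp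
  also have "\<dots> = SA * x + SB" unfolding SA_def SB_def
    by (simp add: sum_distrib_right sum_distrib_left sum.distrib distrib_left mult.assoc mult.commute mult.left_commute)
  finally have px: "poly p x = SA * x + SB" .
  have "poly p x' = (\<Sum>i\<le>degree p. coeff p i * (A i * x' + B i))"
    unfolding poly_altdef using AB by simp
  also have "\<dots> = SA * x' + SB" unfolding SA_def SB_def
    by (simp add: sum_distrib_right sum_distrib_left sum.distrib distrib_left mult.assoc mult.commute mult.left_commute)
  finally have px': "poly p x' = SA * x' + SB" .
  have "SA = 0"
  proof (rule ccontr)
    assume "SA \<noteq> 0"
    hence "x = - SB / SA" using px p(2) by (simp add: field_simps eq_neg_iff_add_eq_0)
    moreover have "- SB / SA \<in> K" using SAK SBK K by (simp add: subfield_divide subfield_uminus)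
    ultimately show False using x by simp
  qed
  hence "SB = 0" using px p(2) by simp
  show ?thesis using px' \<open>SA = 0\<close> \<open>SB = 0\<close> unfolding x'_def by simp
qed

definition basis_det :: "complex set \<Rightarrow> complex \<Rightarrow> complex \<Rightarrow> complex \<Rightarrow> complex" where
  "basis_det K a b x = fst (coords2 K a b (x * a)) * snd (coords2 K a b (x * b))
        - fst (coords2 K a b (x * b)) * snd (coords2 K a b (x * a))"

definition quad_norm :: "complex set \<Rightarrow> complex \<Rightarrow> complex" where
  "quad_norm K x = (if x \<in> K then x ^ 2 else (THE n. n \<in> K \<and> (\<exists>t\<in>K. x ^ 2 - t * x + n = 0)))"

locale quadratic_ext =
  fixes K L :: "complex set"
  assumes sfK: "is_subfield K" and sfL: "is_subfield L" and KL: "K \<subseteq> L"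
    and ex_basis: "\<exists>a b. is_basis2 K L a b"
begin

lemma basis_det_char:
  assumes B: "is_basis2 K L a b" and x: "x \<in> L"
  shows "basis_det K a b x \<in> K"
    and "fst (coords2 K a b (x * a)) + snd (coords2 K a b (x * b)) \<in> K"
    and "x ^ 2 - (fst (coords2 K a b (x * a)) + snd (coords2 K a b (x * b))) * x + basis_det K a b x = 0"
proof -
  have ab: "a \<in> L" "b \<in> L" using basis2_mem[OF B] by auto
  have xa: "x * a \<in> L" and xb: "x * b \<in> L" using ab x subfield_mult[OF sfL] by auto
  obtain al be where c1: "coords2 K a b (x * a) = (al, be)" by (cases "coords2 K a b (x * a)")
  obtain ga de where c2: "coords2 K a b (x * b) = (ga, de)" by (cases "coords2 K a b (x * b)")
  have h1: "al \<in> K" "be \<in> K" "x * a = al * a + be * b" using coords2_spec[OF B xa] c1 by auto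
  have h2: "ga \<in> K" "de \<in> K" "x * b = ga * a + de * b" using coords2_spec[OF B xb] c2 by auto
  have anz: "a \<noteq> 0" and bnz: "b \<noteq> 0" using basis2_nonzero[OF B sfK sfL] by auto
  have "(x - al) * a = be * b" using h1 by (simp add: algebra_simps)
  moreover have "(x - de) * b = ga * a" using h2 by (simp add: algebra_simps)
  ultimately have "((x - al) * (x - de)) * (a * b) = (be * ga) * (a * b)"
    by (metis mult.assoc mult.left_commute)
  hence "(x - al) * (x - de) = be * ga" using anz bnz by simp
  hence "x ^ 2 - (al + de) * x + (al * de - ga * be) = 0"
    by (simp add: algebra_simps power2_eq_square)
  thus "x ^ 2 - (fst (coords2 K a b (x * a)) + snd (coords2 K a b (x * b))) * x + basis_det K a b x = 0"
    unfolding basis_det_def c1 c2 by simp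
  show "basis_det K a b x \<in> K" unfolding basis_det_def c1 c2 using h1 h2 sfK
    by (simp add: subfield_diff subfield_mult)
  show "fst (coords2 K a b (x * a)) + snd (coords2 K a b (x * b)) \<in> K"
    unfolding c1 c2 using h1 h2 sfK by (simp add: subfield_add)
qed

lemma basis_det_of_base:
  assumes B: "is_basis2 K L a b" and x: "x \<in> K"
  shows "basis_det K a b x = x ^ 2"
proof -
  have ab: "a \<in> L" "b \<in> L" using basis2_mem[OF B] by auto
  have xL: "x \<in> L" using x KL by auto
  have xa: "x * a \<in> L" and xb: "x * b \<in> L" using ab xL subfield_mult[OF sfL] by auto
  have "coords2 K a b (x * a) = (x, 0)"
    by (rule coords2_eqI[OF B xa x subfield_0[OF sfK]]) simp
  moreover have "coords2 K a b (x * b) = (0, x)"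
    by (rule coords2_eqI[OF B xb subfield_0[OF sfK] x]) simp
  ultimately show ?thesis unfolding basis_det_def by (simp add: power2_eq_square)
qed

lemma quadratic_relation_unique:
  assumes x: "x \<notin> K" and "t \<in> K" "n \<in> K" "t' \<in> K" "n' \<in> K"
    and e1: "x ^ 2 - t * x + n = 0" and e2: "x ^ 2 - t' * x + n' = 0"
  shows "n = n'" "t = t'"
proof -
  have "(t' - t) * x = (x ^ 2 - t * x + n) - (x ^ 2 - t' * x + n') + (n' - n)" by (simp add: algebra_simps)
  hence e: "(t' - t) * x = n' - n" using e1 e2 by simp
  show tt: "t = t'"
  proof (rule ccontr)
    assume "t \<noteq> t'"
    hence "x = (n' - n) / (t' - t)" using e by (simp add: field_simps)
    moreover have "(n' - n) / (t' - t) \<in> K" using assms sfK by (simp add: subfield_divide subfield_diff)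
    ultimately show False using x by simp
  qed
  show "n = n'" using e tt by simp
qed

lemma basis_det_eq_quad_norm:
  assumes B: "is_basis2 K L a b" and x: "x \<in> L"
  shows "basis_det K a b x = quad_norm K x"
proof (cases "x \<in> K")
  case True thus ?thesis using basis_det_of_base[OF B] by (simp add: quad_norm_def)
next
  case False
  have P: "basis_det K a b x \<in> K \<and> (\<exists>t\<in>K. x ^ 2 - t * x + basis_det K a b x = 0)"
    using basis_det_char[OF B x] by blast
  have "(THE n. n \<in> K \<and> (\<exists>t\<in>K. x ^ 2 - t * x + n = 0)) = basis_det K a b x"
  proof (rule the_equality)
    fix n assume "n \<in> K \<and> (\<exists>t\<in>K. x ^ 2 - t * x + n = 0)"
    then obtain t where "n \<in> K" "t \<in> K" "x ^ 2 - t * x + n = 0" by blast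
    moreover obtain t' where "t' \<in> K" "x ^ 2 - t' * x + basis_det K a b x = 0" using P by blast
    ultimately show "n = basis_det K a b x" using quadratic_relation_unique[OF False] P by blast
  qed (use P in blast)
  thus ?thesis using False by (simp add: quad_norm_def)
qed

lemma rel_norm_eq_quad_norm:
  assumes x: "x \<in> L"
  shows "rel_norm K L x = quad_norm K x"
proof -
  obtain a0 b0 where B0: "is_basis2 K L a0 b0" using ex_basis by blast
  show ?thesis unfolding rel_norm_def basis_det_def[symmetric]
  proof (rule the_equality)
    show "\<forall>a b. is_basis2 K L a b \<longrightarrow> quad_norm K x = basis_det K a b x"
      using basis_det_eq_quad_norm[OF _ x] by simp
  next
    fix n assume "\<forall>a b. is_basis2 K L a b \<longrightarrow> n = basis_det K a b x"
    thus "n = quad_norm K x" using basis_det_eq_quad_norm[OF B0 x] B0 by simp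
  qed
qed

lemma rel_norm_in_base: "x \<in> L \<Longrightarrow> rel_norm K L x \<in> K"
  using basis_det_char(1) basis_det_eq_quad_norm rel_norm_eq_quad_norm ex_basis by metis

lemma rel_norm_of_base: "x \<in> K \<Longrightarrow> rel_norm K L x = x ^ 2"
  using rel_norm_eq_quad_norm[of x] KL by (auto simp: quad_norm_def)

lemma rel_norm_quadratic_relation: "x \<in> L \<Longrightarrow> \<exists>t\<in>K. x ^ 2 - t * x + rel_norm K L x = 0"
  using basis_det_char(2,3) basis_det_eq_quad_norm rel_norm_eq_quad_norm ex_basis by metis

lemma rel_norm_mult:
  assumes x: "x \<in> L" and y: "y \<in> L"
  shows "rel_norm K L (x * y) = rel_norm K L x * rel_norm K L y"
proof -
  obtain a b where B: "is_basis2 K L a b" using ex_basis by blast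
  have ab: "a \<in> L" "b \<in> L" using basis2_mem[OF B] by auto
  have xy: "x * y \<in> L" using x y subfield_mult[OF sfL] by auto
  have mem: "u * v \<in> L" if "u \<in> L" "v \<in> L" for u v using that subfield_mult[OF sfL] by auto
  obtain al be where c1: "coords2 K a b (x * a) = (al, be)" by (cases "coords2 K a b (x * a)")
  obtain ga de where c2: "coords2 K a b (x * b) = (ga, de)" by (cases "coords2 K a b (x * b)")
  obtain al' be' where c3: "coords2 K a b (y * a) = (al', be')" by (cases "coords2 K a b (y * a)")
  obtain ga' de' where c4: "coords2 K a b (y * b) = (ga', de')" by (cases "coords2 K a b (y * b)")
  have h1: "al \<in> K" "be \<in> K" "x * a = al * a + be * b" using coords2_spec[OF B mem[OF x ab(1)]] c1 by auto
  have h2: "ga \<in> K" "de \<in> K" "x * b = ga * a + de * b" using coords2_spec[OF B mem[OF x ab(2)]] c2 by auto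
  have h3: "al' \<in> K" "be' \<in> K" "y * a = al' * a + be' * b" using coords2_spec[OF B mem[OF y ab(1)]] c3 by auto
  have h4: "ga' \<in> K" "de' \<in> K" "y * b = ga' * a + de' * b" using coords2_spec[OF B mem[OF y ab(2)]] c4 by auto
  have "x * y * a = x * (y * a)" by simp
  also have "\<dots> = x * (al' * a + be' * b)" using h3 by simp
  also have "\<dots> = al' * (x * a) + be' * (x * b)" by (simp add: algebra_simps)
  also have "\<dots> = (al' * al + be' * ga) * a + (al' * be + be' * de) * b" using h1 h2 by (simp add: algebra_simps)
  finally have e1: "coords2 K a b (x * y * a) = (al' * al + be' * ga, al' * be + be' * de)"
    using h1 h2 h3 h4 sfK by (intro coords2_eqI[OF B mem[OF xy ab(1)]]) (auto simp: subfield_add subfield_mult)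
  have "x * y * b = x * (y * b)" by simp
  also have "\<dots> = x * (ga' * a + de' * b)" using h4 by simp
  also have "\<dots> = ga' * (x * a) + de' * (x * b)" by (simp add: algebra_simps)
  also have "\<dots> = (ga' * al + de' * ga) * a + (ga' * be + de' * de) * b" using h1 h2 by (simp add: algebra_simps)
  finally have e2: "coords2 K a b (x * y * b) = (ga' * al + de' * ga, ga' * be + de' * de)"
    using h1 h2 h3 h4 sfK by (intro coords2_eqI[OF B mem[OF xy ab(2)]]) (auto simp: subfield_add subfield_mult)
  have "basis_det K a b (x * y) = basis_det K a b x * basis_det K a b y"
    unfolding basis_det_def c1 c2 c3 c4 e1 e2 by (simp add: algebra_simps)
  thus ?thesis using rel_norm_eq_quad_norm basis_det_eq_quad_norm[OF B] x y xy by simp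
qed

lemma rel_norm_one: "rel_norm K L 1 = 1"
  using rel_norm_of_base subfield_1[OF sfK] by simp

lemma rel_norm_algebraic_int:
  assumes x: "x \<in> L" and ai: "algebraic_int x"
  shows "algebraic_int (rel_norm K L x)"
proof (cases "x \<in> K")
  case True thus ?thesis using rel_norm_of_base ai by (simp add: algebraic_int_power)
next
  case False
  obtain t where t: "t \<in> K" "x ^ 2 - t * x + rel_norm K L x = 0" using rel_norm_quadratic_relation[OF x] by blast
  obtain p where p: "lead_coeff p = 1" "\<forall>i. coeff p i \<in> \<int>" "poly p x = 0"
    using ai by (auto elim: algebraic_int.cases)
  have "poly p (t - x) = 0"
    by (rule conjugate_root[OF sfK False t(1) t(2) rel_norm_in_base[OF x] p(2,3)])
  hence "algebraic_int (t - x)" using p by (auto intro: algebraic_int.intros)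
  moreover have "rel_norm K L x = x * (t - x)" using t(2) by (simp add: algebra_simps power2_eq_square)
  ultimately show ?thesis using ai by (simp add: algebraic_int_mult)
qed

end

section \<open>Cube classes of unit groups\<close>

definition mult_group :: "complex set \<Rightarrow> bool" where
  "mult_group G \<longleftrightarrow> 1 \<in> G \<and> (\<forall>x\<in>G. \<forall>y\<in>G. x * y \<in> G) \<and> (\<forall>x\<in>G. x \<noteq> 0 \<and> inverse x \<in> G)"

definition cube_coset :: "complex set \<Rightarrow> complex \<Rightarrow> complex set" where
  "cube_coset G g = (\<lambda>h. g * h) ` cubes G"

lemma quot_cubes_eq_image: "quot G (cubes G) = cube_coset G ` G"
  unfolding quot_def cube_coset_def by blast

lemma mult_group_power: "mult_group G \<Longrightarrow> x \<in> G \<Longrightarrow> x ^ n \<in> G"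
  by (induction n) (auto simp: mult_group_def)

lemma mult_group_one: "mult_group G \<Longrightarrow> 1 \<in> G"
  and mult_group_mult: "mult_group G \<Longrightarrow> x \<in> G \<Longrightarrow> y \<in> G \<Longrightarrow> x * y \<in> G"
  and mult_group_inverse: "mult_group G \<Longrightarrow> x \<in> G \<Longrightarrow> inverse x \<in> G"
  and mult_group_nonzero: "mult_group G \<Longrightarrow> x \<in> G \<Longrightarrow> x \<noteq> 0"
  unfolding mult_group_def by auto

lemma cube_coset_eq_iff:
  assumes G: "mult_group G" and x: "x \<in> G" and y: "y \<in> G"
  shows "cube_coset G x = cube_coset G y \<longleftrightarrow> (\<exists>w\<in>G. x = y * w ^ 3)"
proof
  assume "cube_coset G x = cube_coset G y"
  moreover have "x \<in> cube_coset G x" unfolding cube_coset_def cubes_def using G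
    by (auto simp: mult_group_def image_iff intro!: exI[of _ 1])
  ultimately obtain w where "w \<in> G" "x = y * w ^ 3" unfolding cube_coset_def cubes_def by auto
  thus "\<exists>w\<in>G. x = y * w ^ 3" by blast
next
  assume "\<exists>w\<in>G. x = y * w ^ 3"
  then obtain w where w: "w \<in> G" "x = y * w ^ 3" by blast
  have wi: "inverse w \<in> G" "w \<noteq> 0" using G w(1) by (auto simp: mult_group_def)
  have yx: "y = x * (inverse w) ^ 3" using w wi by (simp add: power_inverse field_simps)
  have sub: "cube_coset G a \<subseteq> cube_coset G b" if "a = b * z ^ 3" "z \<in> G" for a b z
  proof
    fix t assume "t \<in> cube_coset G a"
    then obtain h where h: "h \<in> G" "t = a * h ^ 3" unfolding cube_coset_def cubes_def by auto
    have "t = b * (z * h) ^ 3" using h that by (simp add: power_mult_distrib)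
    moreover have "z * h \<in> G" using G h that by (auto simp: mult_group_def)
    ultimately show "t \<in> cube_coset G b" unfolding cube_coset_def cubes_def by auto
  qed
  show "cube_coset G x = cube_coset G y" using sub[OF w(2) w(1)] sub[OF yx wi(1)] by blast
qed

lemma card_image_eq_if_same_fibers:
  assumes "\<And>x y. x \<in> X \<Longrightarrow> y \<in> X \<Longrightarrow> f x = f y \<longleftrightarrow> g x = g y"
  shows "card (f ` X) = card (g ` X)"
proof -
  define h where "h = (\<lambda>z. g (inv_into X f z))"
  have inv: "inv_into X f z \<in> X \<and> f (inv_into X f z) = z" if "z \<in> f ` X" for z
    using that by (simp add: inv_into_into f_inv_into_f)
  have "inj_on h (f ` X)"
  proof (rule inj_onI)
    fix z1 z2 assume z: "z1 \<in> f ` X" "z2 \<in> f ` X" "h z1 = h z2"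
    thus "z1 = z2" using assms inv[OF z(1)] inv[OF z(2)] unfolding h_def by metis
  qed
  moreover have "h ` (f ` X) = g ` X"
  proof
    show "h ` f ` X \<subseteq> g ` X" using inv unfolding h_def by blast
    show "g ` X \<subseteq> h ` f ` X"
    proof
      fix t assume "t \<in> g ` X"
      then obtain x where x: "x \<in> X" "t = g x" by blast
      have "f (inv_into X f (f x)) = f x" using inv x by blast
      hence "g (inv_into X f (f x)) = g x" using assms inv x by blast
      thus "t \<in> h ` f ` X" unfolding h_def using x by force
    qed
  qed
  ultimately show ?thesis using card_image by fastforce
qed


lemma mult_group_units:
  assumes "is_subring S" shows "mult_group (units_of_set S)"
  using assms unfolding mult_group_def units_of_set_def is_subring_def
  by (auto simp: inverse_mult_distrib)

lemma subring_ring_of_integers: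
  assumes "is_subfield K" shows "is_subring (ring_of_integers K)"
  using assms unfolding is_subring_def ring_of_integers_def
  by (auto simp: subfield_0 subfield_1 subfield_add subfield_diff subfield_mult algebraic_int_add algebraic_int_diff algebraic_int_mult)

locale norm_map =
  fixes G H :: "complex set" and N :: "complex \<Rightarrow> complex"
  assumes G: "mult_group G" and H: "mult_group H" and H_subset: "H \<subseteq> G"
    and N_mult: "x \<in> G \<Longrightarrow> y \<in> G \<Longrightarrow> N (x * y) = N x * N y"
    and N_in_H: "x \<in> G \<Longrightarrow> N x \<in> H"
    and N_on_H: "h \<in> H \<Longrightarrow> N h = h ^ 2"
begin

definition kernel :: "complex set" where
  "kernel = {x \<in> G. N x = 1}"

lemma N_one: "N 1 = 1"
  using N_on_H[OF mult_group_one[OF H]] by simp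

lemma N_nonzero: "x \<in> G \<Longrightarrow> N x \<noteq> 0"
  using mult_group_nonzero[OF H N_in_H] .

lemma N_power: "x \<in> G \<Longrightarrow> N (x ^ n) = N x ^ n"
  by (induction n) (simp_all add: N_one N_mult mult_group_power[OF G])

lemma N_inverse: "x \<in> G \<Longrightarrow> N (inverse x) = inverse (N x)"
  using N_mult[of x "inverse x"] mult_group_inverse[OF G] mult_group_nonzero[OF G] N_one
  by (simp add: inverse_unique)

lemma mult_group_kernel: "mult_group kernel"
  unfolding mult_group_def kernel_def
  using N_one N_mult N_inverse mult_group_one[OF G] mult_group_mult[OF G]
    mult_group_inverse[OF G] mult_group_nonzero[OF G]
  by auto

definition twist :: "complex \<Rightarrow> complex" where
  "twist u = u ^ 2 * inverse (N u)"

lemma twist_in_kernel: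
  assumes u: "u \<in> G" shows "twist u \<in> kernel"
proof -
  have iN: "inverse (N u) \<in> G" using mult_group_inverse[OF H N_in_H[OF u]] H_subset by blast
  have "N (twist u) = N u ^ 2 * inverse (N u) ^ 2"
    unfolding twist_def
    using N_mult[OF mult_group_power[OF G u] iN] N_power[OF u] N_on_H mult_group_inverse[OF H N_in_H[OF u]]
    by simp
  also have "\<dots> = 1" using N_nonzero[OF u] by (simp add: field_simps)
  finally show ?thesis
    unfolding kernel_def twist_def using mult_group_mult[OF G mult_group_power[OF G u] iN] by blast
qed

lemma power4_eq_twist_norm: "u \<in> G \<Longrightarrow> u ^ 4 = twist u ^ 2 * N u ^ 2"
  unfolding twist_def using N_nonzero by (simp add: field_simps)


lemma cube_coset_eq_iff_twist_norm:
  assumes u: "u \<in> G" and v: "v \<in> G"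
  shows "cube_coset G u = cube_coset G v \<longleftrightarrow>
    cube_coset kernel (twist u) = cube_coset kernel (twist v) \<and> cube_coset H (N u) = cube_coset H (N v)"
proof
  assume "cube_coset G u = cube_coset G v"
  then obtain w where w: "w \<in> G" "u = v * w ^ 3" using cube_coset_eq_iff[OF G u v] by blast
  have Nu: "N u = N v * N w ^ 3" using w N_mult[OF v] N_power[OF w(1)] mult_group_power[OF G w(1)] by simp
  have "twist u = twist v * twist w ^ 3"
    unfolding twist_def Nu using w N_nonzero[OF v] N_nonzero[OF w(1)]
    by (simp add: field_simps power_mult_distrib)
  then show "cube_coset kernel (twist u) = cube_coset kernel (twist v) \<and> cube_coset H (N u) = cube_coset H (N v)"
    using cube_coset_eq_iff[OF mult_group_kernel twist_in_kernel[OF u] twist_in_kernel[OF v]]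
      cube_coset_eq_iff[OF H N_in_H[OF u] N_in_H[OF v]] twist_in_kernel[OF w(1)] N_in_H[OF w(1)] Nu
    by blast
next
  assume "cube_coset kernel (twist u) = cube_coset kernel (twist v) \<and> cube_coset H (N u) = cube_coset H (N v)"
  then obtain a r where a: "a \<in> kernel" "twist u = twist v * a ^ 3" and r: "r \<in> H" "N u = N v * r ^ 3"
    using cube_coset_eq_iff[OF mult_group_kernel twist_in_kernel[OF u] twist_in_kernel[OF v]]
      cube_coset_eq_iff[OF H N_in_H[OF u] N_in_H[OF v]] by blast
  have aG: "a \<in> G" using a(1) unfolding kernel_def by blast
  have rG: "r \<in> G" using r(1) H_subset by blast
  define w where "w = v * a ^ 2 * r ^ 2 * inverse u"
  have wG: "w \<in> G"
    unfolding w_def using G u v aG rG by (intro mult_group_mult mult_group_power mult_group_inverse)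
  have "u ^ 4 = v ^ 4 * (a ^ 2 * r ^ 2) ^ 3"
    unfolding power4_eq_twist_norm[OF u] power4_eq_twist_norm[OF v] a(2) r(2)
    by (simp add: algebra_simps power_mult_distrib flip: power_mult)
  then have "u = v * w ^ 3"
    unfolding w_def using mult_group_nonzero[OF G u] by (simp add: field_simps eval_nat_numeral)
  then show "cube_coset G u = cube_coset G v" using cube_coset_eq_iff[OF G u v] wG by blast
qed

lemma cube_coset_twist_norm_surj:
  assumes a: "a \<in> kernel" and r: "r \<in> H"
  shows "cube_coset kernel (twist (a ^ 2 * r ^ 2)) = cube_coset kernel a"
    and "cube_coset H (N (a ^ 2 * r ^ 2)) = cube_coset H r"
proof -
  have aG: "a \<in> G" and Na: "N a = 1" using a unfolding kernel_def by auto
  have rG: "r \<in> G" using r H_subset by blast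
  have uG: "a ^ 2 * r ^ 2 \<in> G" using G aG rG by (intro mult_group_mult mult_group_power)
  have "N (a ^ 2 * r ^ 2) = r ^ 4"
    using N_mult[OF mult_group_power[OF G aG] mult_group_power[OF G rG]] N_power[OF aG] N_power[OF rG]
      Na N_on_H[OF r] by (simp flip: power_mult)
  then have Nu: "N (a ^ 2 * r ^ 2) = r * r ^ 3" by (simp add: eval_nat_numeral)
  have "twist (a ^ 2 * r ^ 2) = a * a ^ 3"
    unfolding twist_def Nu using mult_group_nonzero[OF G aG] mult_group_nonzero[OF G rG]
    by (simp add: field_simps eval_nat_numeral)
  then show "cube_coset kernel (twist (a ^ 2 * r ^ 2)) = cube_coset kernel a"
    using cube_coset_eq_iff[OF mult_group_kernel twist_in_kernel[OF uG] a] a by blast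
  show "cube_coset H (N (a ^ 2 * r ^ 2)) = cube_coset H r"
    using cube_coset_eq_iff[OF H N_in_H[OF uG] r] r Nu by blast
qed

theorem card_quot_cubes:
  "card (quot G (cubes G)) = card (quot kernel (cubes kernel)) * card (quot H (cubes H))"
proof -
  define g where "g u = (cube_coset kernel (twist u), cube_coset H (N u))" for u
  have "g ` G = quot kernel (cubes kernel) \<times> quot H (cubes H)"
  proof
    show "g ` G \<subseteq> quot kernel (cubes kernel) \<times> quot H (cubes H)"
      unfolding quot_cubes_eq_image g_def using twist_in_kernel N_in_H by auto
    show "quot kernel (cubes kernel) \<times> quot H (cubes H) \<subseteq> g ` G"
    proof
      fix z assume "z \<in> quot kernel (cubes kernel) \<times> quot H (cubes H)"
      then obtain a r where ar: "a \<in> kernel" "r \<in> H" "z = (cube_coset kernel a, cube_coset H r)"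
        unfolding quot_cubes_eq_image by blast
      have "a ^ 2 * r ^ 2 \<in> G"
        using ar(1,2) H_subset G unfolding kernel_def by (blast intro: mult_group_mult mult_group_power)
      then show "z \<in> g ` G"
        unfolding g_def ar(3) using cube_coset_twist_norm_surj[OF ar(1,2)] by (auto intro!: rev_image_eqI)
    qed
  qed
  moreover have "card (quot G (cubes G)) = card (g ` G)"
    unfolding quot_cubes_eq_image g_def
    by (rule card_image_eq_if_same_fibers) (use cube_coset_eq_iff_twist_norm in blast)
  ultimately show ?thesis by (simp add: card_cartesian_product)
qed

end

section \<open>Embeddings of a number field\<close>

definition rat_spans :: "complex set \<Rightarrow> complex set \<Rightarrow> bool" where
  "rat_spans K X \<longleftrightarrow> (\<forall>x\<in>K. \<exists>c. (\<forall>y\<in>X. c y \<in> \<rat>) \<and> x = (\<Sum>y\<in>X. c y * y))"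

lemma rat_spans_remove:
  assumes fin: "finite X" and sp: "rat_spans K X" and y0: "y0 \<in> X"
    and e: "\<forall>y\<in>X - {y0}. e y \<in> \<rat>" "y0 = (\<Sum>y\<in>X - {y0}. e y * y)"
  shows "rat_spans K (X - {y0})"
  unfolding rat_spans_def
proof
  fix x assume "x \<in> K"
  then obtain c where c: "\<forall>y\<in>X. c y \<in> \<rat>" "x = (\<Sum>y\<in>X. c y * y)" using sp unfolding rat_spans_def by blast
  have "x = c y0 * y0 + (\<Sum>y\<in>X - {y0}. c y * y)" using c(2) fin y0 by (simp add: sum.remove)
  also have "c y0 * y0 = (\<Sum>y\<in>X - {y0}. c y0 * e y * y)"
    by (subst e(2)) (simp add: sum_distrib_left mult.assoc)
  finally have "x = (\<Sum>y\<in>X - {y0}. (c y + c y0 * e y) * y)"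
    by (simp add: sum.distrib distrib_right)
  moreover have "\<forall>y\<in>X - {y0}. c y + c y0 * e y \<in> \<rat>" using c(1) e(1) y0 by (auto intro: Rats_add Rats_mult)
  ultimately show "\<exists>c. (\<forall>y\<in>X - {y0}. c y \<in> \<rat>) \<and> x = (\<Sum>y\<in>X - {y0}. c y * y)"
    by (intro exI[of _ "\<lambda>y. c y + c y0 * e y"] conjI)
qed

lemma minimal_rat_spans_independent:
  assumes fin: "finite X" and sp: "rat_spans K X"
    and minimal: "\<And>Y. Y \<subseteq> X \<Longrightarrow> rat_spans K Y \<Longrightarrow> card X \<le> card Y"
    and c: "\<forall>y\<in>X. c y \<in> \<rat>" "(\<Sum>y\<in>X. c y * y) = 0"
  shows "\<forall>y\<in>X. c y = 0"
proof (rule ccontr)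
  assume "\<not> (\<forall>y\<in>X. c y = 0)"
  then obtain y0 where y0: "y0 \<in> X" "c y0 \<noteq> 0" by blast
  have 0: "0 = c y0 * y0 + (\<Sum>y\<in>X - {y0}. c y * y)" using c(2) fin y0 by (simp add: sum.remove)
  have "(\<Sum>y\<in>X - {y0}. (- c y / c y0) * y) = (\<Sum>y\<in>X - {y0}. - (c y * y) / c y0)"
    by (rule sum.cong) auto
  also have "\<dots> = - (\<Sum>y\<in>X - {y0}. c y * y) / c y0" by (simp add: sum_divide_distrib sum_negf)
  also have "\<dots> = y0" using 0 y0(2) by (simp add: field_simps add_eq_0_iff2)
  finally have e2: "y0 = (\<Sum>y\<in>X - {y0}. (- c y / c y0) * y)" by simp
  have e1: "\<forall>y\<in>X - {y0}. - c y / c y0 \<in> \<rat>"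
  proof
    fix y assume y: "y \<in> X - {y0}"
    have "c y \<in> \<rat>" "c y0 \<in> \<rat>" using c(1) y y0 by simp_all
    thus "- c y / c y0 \<in> \<rat>" by (intro Rats_divide Rats_minus_iff[THEN iffD2])
  qed
  have "rat_spans K (X - {y0})" by (rule rat_spans_remove[OF fin sp y0(1) e1 e2])
  hence "card X \<le> card (X - {y0})" using minimal by blast
  moreover have "card (X - {y0}) < card X" using fin y0(1) by (meson card_Diff1_less)
  ultimately show False by simp
qed

locale rat_basis =
  fixes K :: "complex set" and b :: "nat \<Rightarrow> complex" and n :: nat
  assumes sfK: "is_subfield K"
    and bK: "\<And>i. i < n \<Longrightarrow> b i \<in> K"
    and bspan: "\<And>x. x \<in> K \<Longrightarrow> \<exists>c. (\<forall>i<n. c i \<in> \<rat>) \<and> x = (\<Sum>i<n. c i * b i)"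
    and bindep: "\<And>c. (\<forall>i<n. c i \<in> \<rat>) \<Longrightarrow> (\<Sum>i<n. c i * b i) = 0 \<Longrightarrow> \<forall>i<n. c i = 0"

lemma number_field_rat_basis:
  assumes "number_field K"
  shows "\<exists>b n. rat_basis K b n"
proof -
  obtain B where B: "finite B" "B \<subseteq> K" "rat_spans K B"
    using assms unfolding number_field_def rat_spans_def by blast
  have "\<exists>X. (X \<subseteq> B \<and> rat_spans K X) \<and> (\<forall>Y. Y \<subseteq> B \<and> rat_spans K Y \<longrightarrow> card X \<le> card Y)"
    by (rule ex_has_least_nat[of "\<lambda>X. X \<subseteq> B \<and> rat_spans K X" B card]) (use B in auto)
  then obtain X where X: "X \<subseteq> B" "rat_spans K X" "\<And>Y. Y \<subseteq> B \<Longrightarrow> rat_spans K Y \<Longrightarrow> card X \<le> card Y" by blast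
  have fX: "finite X" using X(1) B(1) finite_subset by blast
  have indep: "\<forall>y\<in>X. c y = 0" if "\<forall>y\<in>X. c y \<in> \<rat>" "(\<Sum>y\<in>X. c y * y) = 0" for c
    by (rule minimal_rat_spans_independent[OF fX X(2) _ that]) (use X in auto)
  obtain bs where bs: "set bs = X" "distinct bs" using finite_distinct_list[OF fX] by blast
  define n where "n = length bs"
  define b where "b i = bs ! i" for i
  have inj: "inj_on b {..<n}" unfolding b_def n_def using bs(2) by (simp add: inj_on_def nth_eq_iff_index_eq)
  have img: "b ` {..<n} = X" unfolding b_def n_def using bs(1) by (auto simp: in_set_conv_nth)
  have sumX: "(\<Sum>y\<in>X. f y) = (\<Sum>i<n. f (b i))" for f :: "complex \<Rightarrow> complex"
    using sum.reindex[OF inj, of f] img by simp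
  have "rat_basis K b n"
  proof
    show "is_subfield K" using assms number_field_subfield by blast
    show "b i \<in> K" if "i < n" for i using that img X(1) B(2) by blast
  next
    fix x assume "x \<in> K"
    then obtain c where c: "\<forall>y\<in>X. c y \<in> \<rat>" "x = (\<Sum>y\<in>X. c y * y)" using X(2) unfolding rat_spans_def by blast
    show "\<exists>c. (\<forall>i<n. c i \<in> \<rat>) \<and> x = (\<Sum>i<n. c i * b i)"
    proof (intro exI[of _ "\<lambda>i. c (b i)"] conjI allI impI)
      fix i assume "i < n" thus "c (b i) \<in> \<rat>" using c(1) img by blast
    next
      show "x = (\<Sum>i<n. c (b i) * b i)" using c(2) sumX[of "\<lambda>y. c y * y"] by simp
    qed
  next
    fix c assume c: "\<forall>i<n. c i \<in> \<rat>" "(\<Sum>i<n. c i * b i) = 0"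
    define c' where "c' y = c (inv_into {..<n} b y)" for y
    have c'b: "c' (b i) = c i" if "i < n" for i unfolding c'_def using inv_into_f_f[OF inj] that by simp
    have "\<forall>y\<in>X. c' y \<in> \<rat>"
    proof
      fix y assume "y \<in> X"
      then obtain i where "i < n" "y = b i" using img by blast
      thus "c' y \<in> \<rat>" using c(1) c'b by simp
    qed
    moreover have "(\<Sum>y\<in>X. c' y * y) = 0" unfolding sumX using c(2) c'b by simp
    ultimately have "\<forall>y\<in>X. c' y = 0" by (rule indep)
    thus "\<forall>i<n. c i = 0" using c'b img by (metis image_eqI lessThan_iff)
  qed
  thus ?thesis by blast
qed

lemma ex_nontrivial_relation:
  fixes x :: "nat \<Rightarrow> nat \<Rightarrow> complex"
  shows "\<exists>c. (\<exists>k\<le>n. c k \<noteq> 0) \<and> (\<forall>i<n. (\<Sum>k\<le>n. c k * x k i) = 0)"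
proof -
  let ?N = "Suc n"
  define rw where "rw i = (if i = n then 0\<^sub>v ?N else vec ?N (\<lambda>k. x k i))" for i
  define A where "A = mat\<^sub>r ?N ?N rw"
  have A: "A \<in> carrier_mat ?N ?N" unfolding A_def by simp
  have "det A = 0" unfolding A_def rw_def
    by (rule det_row_0) auto
  then obtain w where w: "w \<in> carrier_vec ?N" "w \<noteq> 0\<^sub>v ?N" "A *\<^sub>v w = 0\<^sub>v ?N"
    using det_0_iff_vec_prod_zero[OF A] by blast
  obtain k where k: "k < ?N" "w $ k \<noteq> 0" using w(1,2) by (metis eq_vecI carrier_vecD index_zero_vec(1,2))
  show ?thesis
  proof (intro exI[of _ "\<lambda>k. w $ k"] conjI allI impI)
    show "\<exists>k\<le>n. w $ k \<noteq> 0" using k less_Suc_eq_le by blast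
  next
    fix i assume i: "i < n"
    have "(A *\<^sub>v w) $ i = 0" using w(3) i by simp
    moreover have "(A *\<^sub>v w) $ i = (\<Sum>k<?N. x k i * w $ k)"
      using i w(1) unfolding A_def rw_def
      by (simp add: scalar_prod_def row_def atLeast0LessThan)
    ultimately show "(\<Sum>k\<le>n. w $ k * x k i) = 0" by (simp add: lessThan_Suc_atMost mult.commute)
  qed
qed

definition mat_app :: "nat \<Rightarrow> (nat \<Rightarrow> nat \<Rightarrow> complex) \<Rightarrow> (nat \<Rightarrow> complex) \<Rightarrow> nat \<Rightarrow> complex" where
  "mat_app n m v = (\<lambda>i. if i < n then \<Sum>j<n. m i j * v j else 0)"

definition vecs_below :: "nat \<Rightarrow> (nat \<Rightarrow> complex) set" where
  "vecs_below n = {v. \<forall>i. n \<le> i \<longrightarrow> v i = 0}"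

definition subspace_below :: "nat \<Rightarrow> (nat \<Rightarrow> complex) set \<Rightarrow> bool" where
  "subspace_below n E \<longleftrightarrow> E \<subseteq> vecs_below n \<and> (\<lambda>_. 0) \<in> E \<and> (\<forall>v\<in>E. \<forall>w\<in>E. (\<lambda>i. v i + w i) \<in> E) \<and>
     (\<forall>c. \<forall>v\<in>E. (\<lambda>i. c * v i) \<in> E)"

lemma mat_app_vecs: "mat_app n m v \<in> vecs_below n" unfolding mat_app_def vecs_below_def by auto

lemma mat_app_zero [simp]: "mat_app n m (\<lambda>_. 0) = (\<lambda>_. 0)"
  unfolding mat_app_def by (rule ext) simp


lemma mat_app_lin: "mat_app n m (\<lambda>i. x * v i + y * w i) = (\<lambda>i. x * mat_app n m v i + y * mat_app n m w i)"
  by (auto simp: mat_app_def sum.distrib sum_distrib_left algebra_simps)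

lemma mat_app_scale: "mat_app n m (\<lambda>i. c * v i) = (\<lambda>i. c * mat_app n m v i)"
  using mat_app_lin[of n m c v 0 v] by simp

lemma mat_app_pow_lin: "(mat_app n m ^^ k) (\<lambda>i. x * v i + y * w i) = (\<lambda>i. x * (mat_app n m ^^ k) v i + y * (mat_app n m ^^ k) w i)"
  by (induction k) (auto simp: mat_app_lin)

definition poly_app :: "nat \<Rightarrow> (nat \<Rightarrow> nat \<Rightarrow> complex) \<Rightarrow> complex poly \<Rightarrow> (nat \<Rightarrow> complex) \<Rightarrow> nat \<Rightarrow> complex" where
  "poly_app n m p w = (\<lambda>i. \<Sum>k\<le>degree p. coeff p k * (mat_app n m ^^ k) w i)"

lemma poly_app_bound:
  assumes "degree p < N"
  shows "poly_app n m p w = (\<lambda>i. \<Sum>k<N. coeff p k * (mat_app n m ^^ k) w i)"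
proof
  fix i
  have "(\<Sum>k<N. coeff p k * (mat_app n m ^^ k) w i) = (\<Sum>k\<le>degree p. coeff p k * (mat_app n m ^^ k) w i)"
    by (rule sum.mono_neutral_right) (use assms in \<open>auto simp: coeff_eq_0\<close>)
  thus "poly_app n m p w i = (\<Sum>k<N. coeff p k * (mat_app n m ^^ k) w i)" unfolding poly_app_def by simp
qed

lemma poly_app_smult: "poly_app n m (Polynomial.smult c p) w = (\<lambda>i. c * poly_app n m p w i)"
proof (cases "c = 0")
  case True thus ?thesis by (simp add: poly_app_def)
next
  case False thus ?thesis by (simp add: poly_app_def sum_distrib_left mult.assoc)
qed

lemma poly_app_one: "w \<in> vecs_below n \<Longrightarrow> poly_app n m 1 w = w"
  by (auto simp: poly_app_def)

lemma poly_app_mult_lin: "poly_app n m (p * [:-a, 1:]) w = poly_app n m p (\<lambda>i. mat_app n m w i - a * w i)"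
proof -
  let ?T = "mat_app n m"
  define d where "d = degree p"
  define N where "N = Suc (Suc d)"
  have dq: "degree (p * [:-a, 1:]) < N" unfolding N_def d_def
    using degree_mult_le[of p "[:-a, 1:]"] by simp
  have dp: "degree p < N" unfolding N_def d_def by simp
  have prod: "p * [:-a, 1:] = Polynomial.smult (-a) p + pCons 0 p"
    by (simp add: mult_pCons_right)
  show ?thesis
  proof
    fix i
    have "poly_app n m (p * [:-a, 1:]) w i = (\<Sum>k<N. coeff (p * [:-a, 1:]) k * (?T ^^ k) w i)"
      using poly_app_bound[OF dq] by simp
    also have "\<dots> = (\<Sum>k<N. coeff (pCons 0 p) k * (?T ^^ k) w i) - a * (\<Sum>k<N. coeff p k * (?T ^^ k) w i)"
      unfolding prod by (simp add: algebra_simps sum.distrib sum_distrib_left sum_subtractf)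
    also have "(\<Sum>k<N. coeff (pCons 0 p) k * (?T ^^ k) w i) = (\<Sum>k<Suc d. coeff p k * (?T ^^ Suc k) w i)"
      unfolding N_def by (subst sum.lessThan_Suc_shift) simp
    also have "\<dots> = (\<Sum>k<N. coeff p k * (?T ^^ Suc k) w i)"
      unfolding N_def d_def by (simp add: coeff_eq_0)
    finally have L: "poly_app n m (p * [:-a, 1:]) w i = (\<Sum>k<N. coeff p k * (?T ^^ Suc k) w i) - a * (\<Sum>k<N. coeff p k * (?T ^^ k) w i)" .
    have "poly_app n m p (\<lambda>i. ?T w i - a * w i) i = (\<Sum>k<N. coeff p k * (?T ^^ k) (\<lambda>i. ?T w i - a * w i) i)"
      using poly_app_bound[OF dp] by simp
    also have "\<dots> = (\<Sum>k<N. coeff p k * ((?T ^^ Suc k) w i - a * (?T ^^ k) w i))"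
    proof (rule sum.cong[OF refl])
      fix k
      have "(?T ^^ k) (\<lambda>i. 1 * ?T w i + (- a) * w i) = (\<lambda>i. 1 * (?T ^^ k) (?T w) i + (- a) * (?T ^^ k) w i)"
        by (rule mat_app_pow_lin)
      moreover have "(?T ^^ k) (?T w) = (?T ^^ Suc k) w" by (simp add: funpow_Suc_right del: funpow.simps)
      ultimately show "coeff p k * (?T ^^ k) (\<lambda>i. ?T w i - a * w i) i = coeff p k * ((?T ^^ Suc k) w i - a * (?T ^^ k) w i)"
        by (simp add: fun_eq_iff)
    qed
    also have "\<dots> = (\<Sum>k<N. coeff p k * (?T ^^ Suc k) w i) - a * (\<Sum>k<N. coeff p k * (?T ^^ k) w i)"
      by (simp add: algebra_simps sum_subtractf sum_distrib_left)
    finally show "poly_app n m (p * [:-a, 1:]) w i = poly_app n m p (\<lambda>i. ?T w i - a * w i) i" using L by simp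
  qed
qed

lemma subspace_below_lin: assumes "subspace_below n E" "v \<in> E" "w \<in> E" shows "(\<lambda>i. x * v i + y * w i) \<in> E"
proof -
  have add: "\<forall>v\<in>E. \<forall>w\<in>E. (\<lambda>i. v i + w i) \<in> E" and sc: "\<forall>c. \<forall>v\<in>E. (\<lambda>i. c * v i) \<in> E"
    using assms(1) unfolding subspace_below_def by blast+
  show ?thesis using add[rule_format, OF sc[rule_format, OF assms(2)] sc[rule_format, OF assms(3)]] by simp
qed

lemma eigenvector_of_poly_app_zero:
  assumes E: "subspace_below n E" and inv: "\<forall>v\<in>E. mat_app n m v \<in> E"
  shows "w \<in> E \<Longrightarrow> w \<noteq> (\<lambda>_. 0) \<Longrightarrow> poly_app n m (\<Prod>a\<leftarrow>as. [:- a, 1:]) w = (\<lambda>_. 0) \<Longrightarrow>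
    \<exists>v\<in>E. v \<noteq> (\<lambda>_. 0) \<and> (\<exists>l. mat_app n m v = (\<lambda>i. l * v i))"
proof (induction as arbitrary: w)
  case Nil
  have "w \<in> vecs_below n" using Nil(1) E unfolding subspace_below_def by blast
  thus ?case using Nil poly_app_one by simp
next
  case (Cons a as)
  define w' where "w' = (\<lambda>i. mat_app n m w i - a * w i)"
  have w'E: "w' \<in> E" unfolding w'_def using subspace_below_lin[OF E inv[rule_format, OF Cons(2)] Cons(2), of 1 "-a"] by simp
  have "(\<Prod>a\<leftarrow>a # as. [:- a, 1:]) = (\<Prod>a\<leftarrow>as. [:- a, 1:]) * [:- a, 1:]" by (simp add: mult.commute)
  hence P: "poly_app n m (\<Prod>a\<leftarrow>as. [:- a, 1:]) w' = (\<lambda>_. 0)" using Cons(4) poly_app_mult_lin unfolding w'_def by metis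
  show ?case
  proof (cases "w' = (\<lambda>_. 0)")
    case True
    hence "mat_app n m w = (\<lambda>i. a * w i)" unfolding w'_def by (simp add: fun_eq_iff)
    thus ?thesis using Cons(2,3) by blast
  next
    case False
    show ?thesis by (rule Cons.IH[OF w'E False P])
  qed
qed

lemma invariant_subspace_eigenvector:
  assumes E: "subspace_below n E" and inv: "\<forall>v\<in>E. mat_app n m v \<in> E" and v0: "v0 \<in> E" "v0 \<noteq> (\<lambda>_. 0)"
  shows "\<exists>v\<in>E. v \<noteq> (\<lambda>_. 0) \<and> (\<exists>l. mat_app n m v = (\<lambda>i. l * v i))"
proof -
  let ?T = "mat_app n m"
  have xE: "(?T ^^ k) v0 \<in> E" for k
  proof (induction k)
    case 0 show ?case using v0(1) by simp
  next
    case (Suc k) thus ?case using inv by simp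
  qed
  have EV: "E \<subseteq> vecs_below n" using E unfolding subspace_below_def by blast
  have xV: "(?T ^^ k) v0 i = 0" if "n \<le> i" for k i using xE[of k] EV that unfolding vecs_below_def by blast
  obtain c where c0: "(\<exists>k\<le>n. c k \<noteq> 0) \<and> (\<forall>i<n. (\<Sum>k\<le>n. c k * (?T ^^ k) v0 i) = 0)"
    using ex_nontrivial_relation[of n "\<lambda>k i. (?T ^^ k) v0 i"] ..
  hence c: "\<exists>k\<le>n. c k \<noteq> 0" "\<forall>i<n. (\<Sum>k\<le>n. c k * (?T ^^ k) v0 i) = 0" by simp_all
  define p where "p = (\<Sum>k\<le>n. monom (c k) k)"
  have cp: "coeff p j = (if j \<le> n then c j else 0)" for j
    unfolding p_def by (simp add: coeff_sum coeff_monom sum.delta)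
  have dp: "degree p < Suc n" using cp by (intro le_imp_less_Suc degree_le) auto
  have pnz: "p \<noteq> 0"
  proof
    assume "p = 0"
    obtain k where "k \<le> n" "c k \<noteq> 0" using c(1) by blast
    thus False using cp[of k] \<open>p = 0\<close> by simp
  qed
  have "poly_app n m p v0 = (\<lambda>_. 0)"
  proof
    fix i
    have "poly_app n m p v0 i = (\<Sum>k<Suc n. coeff p k * (?T ^^ k) v0 i)" using poly_app_bound[OF dp] by simp
    also have "\<dots> = (\<Sum>k\<le>n. c k * (?T ^^ k) v0 i)" using cp by (simp add: lessThan_Suc_atMost)
    also have "\<dots> = 0"
    proof (cases "i < n")
      case True thus ?thesis using c(2) by blast
    next
      case False thus ?thesis using xV[of i] by simp
    qed
    finally show "poly_app n m p v0 i = 0" .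
  qed
  moreover obtain as where as: "Polynomial.smult (coeff p (degree p)) (\<Prod>a\<leftarrow>as. [:- a, 1:]) = p"
    using fundamental_theorem_algebra_factorized[of p] by blast
  moreover have "coeff p (degree p) \<noteq> 0" using pnz by simp
  ultimately have "poly_app n m (\<Prod>a\<leftarrow>as. [:- a, 1:]) v0 = (\<lambda>_. 0)"
    using poly_app_smult[of n m "coeff p (degree p)" "\<Prod>a\<leftarrow>as. [:- a, 1:]" v0] by (simp add: fun_eq_iff)
  thus ?thesis by (rule eigenvector_of_poly_app_zero[OF E inv v0])
qed

lemma subspace_below_vecs_below: "subspace_below n (vecs_below n)"
  unfolding subspace_below_def vecs_below_def by auto

lemma subspace_below_eigenspace:
  assumes E: "subspace_below n E"
  shows "subspace_below n {v \<in> E. mat_app n m v = (\<lambda>i. l * v i)}" (is "subspace_below n ?E")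
  unfolding subspace_below_def
proof (intro conjI ballI allI)
  show "?E \<subseteq> vecs_below n" "(\<lambda>_. 0) \<in> ?E" using E unfolding subspace_below_def by auto
next
  fix v w assume v: "v \<in> ?E" and w: "w \<in> ?E"
  have "(\<lambda>i. 1 * v i + 1 * w i) \<in> E" using subspace_below_lin[OF E] v w by blast
  moreover have "mat_app n m (\<lambda>i. 1 * v i + 1 * w i) = (\<lambda>i. l * (1 * v i + 1 * w i))"
    unfolding mat_app_lin using v w by (simp add: algebra_simps)
  ultimately show "(\<lambda>i. v i + w i) \<in> ?E" by simp
next
  fix c v assume v: "v \<in> ?E"
  have "(\<lambda>i. c * v i + 0 * v i) \<in> E" using subspace_below_lin[OF E] v by blast
  moreover have "mat_app n m (\<lambda>i. c * v i) = (\<lambda>i. l * (c * v i))"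
    unfolding mat_app_scale using v by (simp add: algebra_simps)
  ultimately show "(\<lambda>i. c * v i) \<in> ?E" by simp
qed

lemma common_eigenvector:
  assumes "subspace_below n E" "v0 \<in> E" "v0 \<noteq> (\<lambda>_. 0)"
    and "\<forall>m\<in>set ms. \<forall>v\<in>E. mat_app n m v \<in> E"
    and "\<forall>m1\<in>set ms. \<forall>m2\<in>set ms. \<forall>v. mat_app n m1 (mat_app n m2 v) = mat_app n m2 (mat_app n m1 v)"
  shows "\<exists>v\<in>E. v \<noteq> (\<lambda>_. 0) \<and> (\<forall>m\<in>set ms. \<exists>l. mat_app n m v = (\<lambda>i. l * v i))"
  using assms
proof (induction ms arbitrary: E v0)
  case Nil thus ?case by (intro bexI[of _ v0]) simp_all
next
  case (Cons m ms)
  have invm: "\<forall>v\<in>E. mat_app n m v \<in> E" using Cons(5) by simp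
  obtain v1 where v1': "v1 \<in> E" "v1 \<noteq> (\<lambda>_. 0)" "\<exists>l. mat_app n m v1 = (\<lambda>i. l * v1 i)"
    using invariant_subspace_eigenvector[OF Cons(2) invm Cons(3,4)] by blast
  then obtain l where v1: "v1 \<in> E" "v1 \<noteq> (\<lambda>_. 0)" "mat_app n m v1 = (\<lambda>i. l * v1 i)" by blast
  define E' where "E' = {v\<in>E. mat_app n m v = (\<lambda>i. l * v i)}"
  have sE: "subspace_below n E'" unfolding E'_def by (rule subspace_below_eigenspace[OF Cons(2)])
  have invE': "\<forall>m'\<in>set ms. \<forall>v\<in>E'. mat_app n m' v \<in> E'"
  proof (intro ballI)
    fix m' v assume m': "m' \<in> set ms" and v: "v \<in> E'"
    have vE: "v \<in> E" "mat_app n m v = (\<lambda>i. l * v i)" using v unfolding E'_def by auto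
    have "mat_app n m' v \<in> E" using Cons(5) m' vE(1) by simp
    moreover have "mat_app n m (mat_app n m' v) = mat_app n m' (mat_app n m v)"
      by (rule Cons(6)[rule_format]) (use m' in simp_all)
    hence "mat_app n m (mat_app n m' v) = (\<lambda>i. l * mat_app n m' v i)" using vE(2) by (simp add: mat_app_scale)
    ultimately show "mat_app n m' v \<in> E'" unfolding E'_def by blast
  qed
  have v1E': "v1 \<in> E'" using v1 unfolding E'_def by blast
  have comm': "\<forall>m1\<in>set ms. \<forall>m2\<in>set ms. \<forall>v. mat_app n m1 (mat_app n m2 v) = mat_app n m2 (mat_app n m1 v)"
  proof (intro ballI allI)
    fix m1 m2 v assume "m1 \<in> set ms" "m2 \<in> set ms"
    thus "mat_app n m1 (mat_app n m2 v) = mat_app n m2 (mat_app n m1 v)" by (intro Cons(6)[rule_format]) simp_all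
  qed
  obtain v where v: "v \<in> E'" "v \<noteq> (\<lambda>_. 0)" "\<forall>m\<in>set ms. \<exists>l. mat_app n m v = (\<lambda>i. l * v i)"
    using Cons.IH[OF sE v1E' v1(2) invE' comm'] by blast
  have "v \<in> E" "mat_app n m v = (\<lambda>i. l * v i)" using v(1) unfolding E'_def by auto
  hence "\<forall>m'\<in>set (m # ms). \<exists>l. mat_app n m' v = (\<lambda>i. l * v i)" using v(3) by (simp only: list.set insert_iff) blast
  thus ?case using \<open>v \<in> E\<close> v(2) by blast
qed

(* Normalised to 0 outside K, so that an embedding is determined by its values on K. *)
definition embeddings :: "complex set \<Rightarrow> (complex \<Rightarrow> complex) set" where
  "embeddings K = {s. (\<forall>x. x \<notin> K \<longrightarrow> s x = 0) \<and> s 1 = 1 \<and>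
     (\<forall>x\<in>K. \<forall>y\<in>K. s (x + y) = s x + s y \<and> s (x * y) = s x * s y)}"

lemma sum_mult_swap: "(\<Sum>k\<in>A. f k * (\<Sum>i\<in>B. g k i * h i)) = (\<Sum>i\<in>B. (\<Sum>k\<in>A. f k * g k i) * (h i :: complex))"
  by (simp add: sum_distrib_left sum_distrib_right mult.assoc) (rule sum.swap)

context rat_basis
begin

lemma Rats_in_K: "q \<in> \<rat> \<Longrightarrow> q \<in> K" using subfield_Rats[OF sfK] .

lemma coord_unique:
  assumes "\<forall>i<n. c i \<in> \<rat>" "\<forall>i<n. d i \<in> \<rat>" "(\<Sum>i<n. c i * b i) = (\<Sum>i<n. d i * b i)"
  shows "\<forall>i<n. c i = d i"
proof -
  have "(\<Sum>i<n. (c i - d i) * b i) = 0" using assms(3) by (simp add: left_diff_distrib sum_subtractf)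
  moreover have "\<forall>i<n. c i - d i \<in> \<rat>" using assms(1,2) by (simp add: Rats_diff)
  ultimately have "\<forall>i<n. c i - d i = 0" using bindep[of "\<lambda>i. c i - d i"] by blast
  thus ?thesis by simp
qed

definition coord :: "complex \<Rightarrow> nat \<Rightarrow> complex" where
  "coord x = (SOME c. (\<forall>i<n. c i \<in> \<rat>) \<and> x = (\<Sum>i<n. c i * b i))"

lemma coord_spec: assumes "x \<in> K" shows "(\<forall>i<n. coord x i \<in> \<rat>) \<and> x = (\<Sum>i<n. coord x i * b i)"
  unfolding coord_def by (rule someI_ex[OF bspan[OF assms]])

lemma coord_eqI:
  assumes "x \<in> K" "\<forall>i<n. c i \<in> \<rat>" "x = (\<Sum>i<n. c i * b i)"
  shows "\<forall>i<n. coord x i = c i"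
  using coord_unique[of "coord x" c] coord_spec[OF assms(1)] assms(2,3) by simp

definition mult_mat :: "complex \<Rightarrow> nat \<Rightarrow> nat \<Rightarrow> complex" where
  "mult_mat u i j = coord (u * b j) i"

lemma mult_b_in_K: "j < n \<Longrightarrow> u \<in> K \<Longrightarrow> u * b j \<in> K"
  using subfield_mult[OF sfK] bK by blast

lemma mult_mat_eq: "u \<in> K \<Longrightarrow> j < n \<Longrightarrow> u * b j = (\<Sum>i<n. mult_mat u i j * b i)"
  unfolding mult_mat_def using coord_spec[OF mult_b_in_K] by blast

lemma mult_mat_rat: "u \<in> K \<Longrightarrow> j < n \<Longrightarrow> i < n \<Longrightarrow> mult_mat u i j \<in> \<rat>"
  unfolding mult_mat_def using coord_spec[OF mult_b_in_K] by blast

lemma mult_mat_mult: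
  assumes u: "u \<in> K" and w: "w \<in> K" and i: "i < n" and j: "j < n"
  shows "mult_mat (u * w) i j = (\<Sum>k<n. mult_mat u i k * mult_mat w k j)"
proof -
  have uw: "u * w \<in> K" using subfield_mult[OF sfK u w] .
  have "u * w * b j = u * (\<Sum>k<n. mult_mat w k j * b k)" using mult_mat_eq[OF w j] by (simp add: mult.assoc)
  also have "\<dots> = (\<Sum>k<n. mult_mat w k j * (u * b k))" by (simp add: sum_distrib_left algebra_simps)
  also have "\<dots> = (\<Sum>k<n. mult_mat w k j * (\<Sum>i<n. mult_mat u i k * b i))" using mult_mat_eq[OF u] by simp
  also have "\<dots> = (\<Sum>i<n. (\<Sum>k<n. mult_mat u i k * mult_mat w k j) * b i)"
    unfolding sum_mult_swap by (simp add: mult.commute)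
  finally have e: "u * w * b j = (\<Sum>i<n. (\<Sum>k<n. mult_mat u i k * mult_mat w k j) * b i)" .
  have r: "\<forall>i<n. (\<Sum>k<n. mult_mat u i k * mult_mat w k j) \<in> \<rat>"
    using mult_mat_rat[OF u] mult_mat_rat[OF w] j by (auto intro!: Rats_sum Rats_mult)
  have "coord (u * w * b j) i = (\<Sum>k<n. mult_mat u i k * mult_mat w k j)" using coord_eqI[OF mult_b_in_K[OF j uw] r e] i by blast
  thus ?thesis unfolding mult_mat_def[of "u * w"] .
qed

lemma mult_mat_add:
  assumes u: "u \<in> K" and w: "w \<in> K" and i: "i < n" and j: "j < n"
  shows "mult_mat (u + w) i j = mult_mat u i j + mult_mat w i j"
proof -
  have uw: "u + w \<in> K" using subfield_add[OF sfK u w] .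
  have e: "(u + w) * b j = (\<Sum>i<n. (mult_mat u i j + mult_mat w i j) * b i)"
    using mult_mat_eq[OF u j] mult_mat_eq[OF w j] by (simp add: distrib_right sum.distrib)
  have r: "\<forall>i<n. mult_mat u i j + mult_mat w i j \<in> \<rat>" using mult_mat_rat[OF u] mult_mat_rat[OF w] j by (auto intro!: Rats_add)
  have "coord ((u + w) * b j) i = mult_mat u i j + mult_mat w i j" using coord_eqI[OF mult_b_in_K[OF j uw] r e] i by blast
  thus ?thesis unfolding mult_mat_def[of "u + w"] .
qed

lemma mult_mat_lin:
  assumes w: "w \<in> K" and i: "i < n" and j: "j < n"
  shows "mult_mat w i j = (\<Sum>l<n. coord w l * mult_mat (b l) i j)"
proof -
  have c: "\<forall>l<n. coord w l \<in> \<rat>" "w = (\<Sum>l<n. coord w l * b l)" using coord_spec[OF w] by auto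
  have "w * b j = (\<Sum>l<n. coord w l * (b l * b j))"
    by (subst c(2)) (simp add: sum_distrib_right mult.assoc)
  also have "\<dots> = (\<Sum>l<n. coord w l * (\<Sum>i<n. mult_mat (b l) i j * b i))" using mult_mat_eq[OF bK j] by simp
  also have "\<dots> = (\<Sum>i<n. (\<Sum>l<n. coord w l * mult_mat (b l) i j) * b i)"
    by (rule sum_mult_swap)
  finally have e: "w * b j = (\<Sum>i<n. (\<Sum>l<n. coord w l * mult_mat (b l) i j) * b i)" .
  have r: "\<forall>i<n. (\<Sum>l<n. coord w l * mult_mat (b l) i j) \<in> \<rat>"
    using mult_mat_rat[OF bK] c(1) j by (auto intro!: Rats_sum Rats_mult)
  have "coord (w * b j) i = (\<Sum>l<n. coord w l * mult_mat (b l) i j)" using coord_eqI[OF mult_b_in_K[OF j w] r e] i by blast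
  thus ?thesis unfolding mult_mat_def[of w] .
qed

lemma mult_mat_one:
  assumes i: "i < n" and j: "j < n"
  shows "mult_mat 1 i j = (if i = j then 1 else 0)"
proof -
  have "(\<Sum>i<n. (if i = j then 1 else 0) * b i) = (\<Sum>i<n. if i = j then b j else 0)" by (rule sum.cong) auto
  also have "\<dots> = b j" using j by simp
  finally have e: "1 * b j = (\<Sum>i<n. (if i = j then 1 else 0) * b i)" by simp
  have r: "\<forall>i<n. (if i = j then 1 else 0) \<in> (\<rat> :: complex set)" by simp
  have "coord (1 * b j) i = (if i = j then 1 else 0)" using coord_eqI[OF mult_b_in_K[OF j subfield_1[OF sfK]] r e] i by blast
  thus ?thesis unfolding mult_mat_def[of 1] .
qed

lemma mat_app_mult_mat_mult:
  assumes u: "u \<in> K" and w: "w \<in> K"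
  shows "mat_app n (mult_mat (u * w)) v = mat_app n (mult_mat u) (mat_app n (mult_mat w) v)"
proof
  fix i show "mat_app n (mult_mat (u * w)) v i = mat_app n (mult_mat u) (mat_app n (mult_mat w) v) i"
  proof (cases "i < n")
    case True
    have "mat_app n (mult_mat (u * w)) v i = (\<Sum>j<n. (\<Sum>k<n. mult_mat u i k * mult_mat w k j) * v j)"
      unfolding mat_app_def using True mult_mat_mult[OF u w True] by simp
    also have "\<dots> = (\<Sum>k<n. mult_mat u i k * (\<Sum>j<n. mult_mat w k j * v j))"
      by (rule sum_mult_swap[symmetric])
    also have "\<dots> = mat_app n (mult_mat u) (mat_app n (mult_mat w) v) i" unfolding mat_app_def using True by simp
    finally show ?thesis .
  qed (simp add: mat_app_def)
qed

lemma mat_app_mult_mat_comm: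
  assumes u: "u \<in> K" and w: "w \<in> K"
  shows "mat_app n (mult_mat u) (mat_app n (mult_mat w) v) = mat_app n (mult_mat w) (mat_app n (mult_mat u) v)"
  using mat_app_mult_mat_mult[OF u w] mat_app_mult_mat_mult[OF w u] by (simp add: mult.commute)

lemma mat_app_mult_mat_add:
  assumes u: "u \<in> K" and w: "w \<in> K"
  shows "mat_app n (mult_mat (u + w)) v = (\<lambda>i. mat_app n (mult_mat u) v i + mat_app n (mult_mat w) v i)"
  unfolding mat_app_def using mult_mat_add[OF u w] by (auto simp: distrib_right sum.distrib)

lemma mat_app_mult_mat_one: assumes "v \<in> vecs_below n" shows "mat_app n (mult_mat 1) v = v"
proof
  fix i show "mat_app n (mult_mat 1) v i = v i"
  proof (cases "i < n")
    case True
    have "(\<Sum>j<n. mult_mat 1 i j * v j) = (\<Sum>j<n. if i = j then v i else 0)"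
      by (rule sum.cong) (use mult_mat_one True in auto)
    also have "\<dots> = v i" using True by simp
    finally show ?thesis unfolding mat_app_def using True by simp
  next
    case False thus ?thesis using assms unfolding mat_app_def vecs_below_def by simp
  qed
qed

lemma mat_app_mult_mat_lin:
  assumes w: "w \<in> K"
  shows "mat_app n (mult_mat w) v = (\<lambda>i. \<Sum>l<n. coord w l * mat_app n (mult_mat (b l)) v i)"
proof
  fix i show "mat_app n (mult_mat w) v i = (\<Sum>l<n. coord w l * mat_app n (mult_mat (b l)) v i)"
  proof (cases "i < n")
    case True
    have "mat_app n (mult_mat w) v i = (\<Sum>j<n. (\<Sum>l<n. coord w l * mult_mat (b l) i j) * v j)"
      unfolding mat_app_def using True mult_mat_lin[OF w True] by simp
    also have "\<dots> = (\<Sum>l<n. coord w l * (\<Sum>j<n. mult_mat (b l) i j * v j))"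
      by (rule sum_mult_swap[symmetric])
    finally show ?thesis unfolding mat_app_def using True by simp
  qed (simp add: mat_app_def)
qed


lemma embedding_of_common_eigenvector:
  assumes v: "v \<in> vecs_below n" "v \<noteq> (\<lambda>_. 0)"
    and mu: "\<And>j. j < n \<Longrightarrow> mat_app n (mult_mat (b j)) v = (\<lambda>i. mu j * v i)"
  shows "\<exists>s\<in>embeddings K. \<forall>w\<in>K. mat_app n (mult_mat w) v = (\<lambda>i. s w * v i)"
proof -
  obtain i0 where i0: "v i0 \<noteq> 0" using v(2) by (auto simp: fun_eq_iff)
  define s where "s w = (if w \<in> K then \<Sum>l<n. coord w l * mu l else 0)" for w
  have P: "mat_app n (mult_mat w) v = (\<lambda>i. s w * v i)" if w: "w \<in> K" for w
    unfolding mat_app_mult_mat_lin[OF w] s_def using w mu by (simp add: sum_distrib_right mult.assoc)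
  have uniq: "c = s w" if "w \<in> K" "mat_app n (mult_mat w) v = (\<lambda>i. c * v i)" for w c
  proof -
    have "c * v i0 = s w * v i0" using that P[OF that(1)] by metis
    then show ?thesis using i0 by simp
  qed
  have "s \<in> embeddings K"
    unfolding embeddings_def
  proof (intro CollectI conjI allI impI ballI)
    fix x assume "x \<notin> K" then show "s x = 0" unfolding s_def by simp
  next
    have "mat_app n (mult_mat 1) v = (\<lambda>i. 1 * v i)" using mat_app_mult_mat_one[OF v(1)] by simp
    from uniq[OF subfield_1[OF sfK] this] show "s 1 = 1" by simp
  next
    fix x y assume x: "x \<in> K" and y: "y \<in> K"
    have "mat_app n (mult_mat (x + y)) v = (\<lambda>i. (s x + s y) * v i)"
      using mat_app_mult_mat_add[OF x y] P[OF x] P[OF y] by (simp add: distrib_right)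
    from uniq[OF subfield_add[OF sfK x y] this] show "s (x + y) = s x + s y" by simp
    have "mat_app n (mult_mat (x * y)) v = (\<lambda>i. (s x * s y) * v i)"
      using mat_app_mult_mat_mult[OF x y] P[OF x] P[OF y] by (simp add: mat_app_scale mult.assoc mult.left_commute)
    from uniq[OF subfield_mult[OF sfK x y] this] show "s (x * y) = s x * s y" by simp
  qed
  then show ?thesis using P by blast
qed

lemma embedding_with_value:
  assumes u: "u \<in> K" and root: "poly (char_poly (mat n n (\<lambda>(i,j). mult_mat u i j))) l = 0"
  shows "\<exists>s\<in>embeddings K. s u = l"
proof -
  obtain v0 where v0: "\<exists>i<n. v0 i \<noteq> 0" "\<forall>i<n. (\<Sum>j<n. mult_mat u i j * v0 j) = l * v0 i"
    using eigenvector_of_char_poly_root[OF root] by blast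
  define v1 where "v1 i = (if i < n then v0 i else 0)" for i
  define E where "E = {w \<in> vecs_below n. mat_app n (mult_mat u) w = (\<lambda>i. l * w i)}"
  have v1E: "v1 \<in> E" unfolding E_def vecs_below_def v1_def mat_app_def using v0(2) by auto
  have v1nz: "v1 \<noteq> (\<lambda>_. 0)" using v0(1) unfolding v1_def by (auto simp: fun_eq_iff)
  have sE: "subspace_below n E"
    unfolding E_def using subspace_below_eigenspace[OF subspace_below_vecs_below] by simp
  define ms where "ms = map (\<lambda>j. mult_mat (b j)) [0..<n]"
  have ms: "m \<in> set ms \<longleftrightarrow> (\<exists>j<n. m = mult_mat (b j))" for m unfolding ms_def by auto
  have invE: "\<forall>m\<in>set ms. \<forall>w\<in>E. mat_app n m w \<in> E"
  proof (intro ballI)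
    fix m w assume m: "m \<in> set ms" and w: "w \<in> E"
    then obtain j where j: "j < n" "m = mult_mat (b j)" using ms by blast
    have "mat_app n (mult_mat u) (mat_app n m w) = mat_app n m (mat_app n (mult_mat u) w)" unfolding j(2) by (rule mat_app_mult_mat_comm[OF u bK[OF j(1)]])
    also have "\<dots> = (\<lambda>i. l * mat_app n m w i)" using w unfolding E_def by (simp add: mat_app_scale)
    finally show "mat_app n m w \<in> E" unfolding E_def using mat_app_vecs by blast
  qed
  have comm: "\<forall>m1\<in>set ms. \<forall>m2\<in>set ms. \<forall>v. mat_app n m1 (mat_app n m2 v) = mat_app n m2 (mat_app n m1 v)"
    using ms mat_app_mult_mat_comm bK by metis
  obtain v where v: "v \<in> E" "v \<noteq> (\<lambda>_. 0)" "\<forall>m\<in>set ms. \<exists>l. mat_app n m v = (\<lambda>i. l * v i)"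
    using common_eigenvector[OF sE v1E v1nz invE comm] by blast
  have "\<forall>j. \<exists>mu. j < n \<longrightarrow> mat_app n (mult_mat (b j)) v = (\<lambda>i. mu * v i)" using v(3) ms by blast
  then obtain mu where "\<And>j. j < n \<Longrightarrow> mat_app n (mult_mat (b j)) v = (\<lambda>i. mu j * v i)" by metis
  moreover have "v \<in> vecs_below n" using v(1) unfolding E_def by blast
  ultimately obtain s where s: "s \<in> embeddings K" "mat_app n (mult_mat u) v = (\<lambda>i. s u * v i)"
    using embedding_of_common_eigenvector[OF _ v(2)] u by blast
  obtain i0 where "v i0 \<noteq> 0" using v(2) by (auto simp: fun_eq_iff)
  moreover have "l * v i0 = s u * v i0" using v(1) s(2) unfolding E_def by (metis (mono_tags, lifting) mem_Collect_eq)
  ultimately show ?thesis using s(1) by auto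
qed

end

context
  fixes K :: "complex set" and s :: "complex \<Rightarrow> complex"
  assumes sfK: "is_subfield K" and s: "s \<in> embeddings K"
begin

lemma emb_add: "x \<in> K \<Longrightarrow> y \<in> K \<Longrightarrow> s (x + y) = s x + s y"
  and emb_mult: "x \<in> K \<Longrightarrow> y \<in> K \<Longrightarrow> s (x * y) = s x * s y"
  and emb_one: "s 1 = 1"
  and emb_out: "x \<notin> K \<Longrightarrow> s x = 0"
  using s unfolding embeddings_def by auto

lemma emb_zero: "s 0 = 0"
  using emb_add[OF subfield_0[OF sfK] subfield_0[OF sfK]] by simp

lemma emb_uminus: "x \<in> K \<Longrightarrow> s (- x) = - s x"
  using emb_add[of x "- x"] subfield_uminus[OF sfK] emb_zero by (simp add: eq_neg_iff_add_eq_0 add.commute)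

lemma emb_of_nat: "s (of_nat k) = of_nat k"
proof (induction k)
  case 0 thus ?case using emb_zero by simp
next
  case (Suc k)
  have "s (of_nat (Suc k)) = s (of_nat k + 1)" by (simp add: add.commute)
  also have "\<dots> = s (of_nat k) + s 1" by (rule emb_add[OF subfield_of_nat[OF sfK] subfield_1[OF sfK]])
  finally show ?case using Suc emb_one by simp
qed

lemma emb_of_int: "s (of_int k) = of_int k"
proof (cases k rule: int_cases)
  case (nonneg m) thus ?thesis using emb_of_nat by simp
next
  case (neg m)
  have "s (of_int k) = s (- of_nat (Suc m))" using neg by simp
  also have "\<dots> = - s (of_nat (Suc m))" by (rule emb_uminus[OF subfield_of_nat[OF sfK]])
  finally show ?thesis using neg emb_of_nat by (simp del: of_nat_Suc)
qed

lemma emb_inverse: "x \<in> K \<Longrightarrow> s (inverse x) = inverse (s x)"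
proof (cases "x = 0")
  case True thus ?thesis using emb_zero by simp
next
  case False
  assume x: "x \<in> K"
  have "s x * s (inverse x) = 1" using emb_mult[OF x subfield_inverse[OF sfK x]] False emb_one by simp
  thus ?thesis by (simp add: inverse_unique)
qed

lemma emb_nonzero: "x \<in> K \<Longrightarrow> x \<noteq> 0 \<Longrightarrow> s x \<noteq> 0"
  using emb_mult[of x "inverse x"] subfield_inverse[OF sfK] emb_one by force

lemma emb_rat: "q \<in> \<rat> \<Longrightarrow> s q = q"
proof -
  assume "q \<in> \<rat>"
  then obtain a b where q: "q = of_int a / of_int b" by (auto elim!: Rats_cases')
  have "s q = s (of_int a * inverse (of_int b))" using q by (simp add: divide_inverse)
  also have "\<dots> = of_int a * inverse (of_int b)"
    using emb_mult[OF subfield_of_int[OF sfK] subfield_inverse[OF sfK subfield_of_int[OF sfK]]] emb_inverse[OF subfield_of_int[OF sfK]]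
      emb_of_int by simp
  finally show ?thesis using q by (simp add: divide_inverse)
qed

lemma emb_sum: "(\<And>i. i \<in> I \<Longrightarrow> f i \<in> K) \<Longrightarrow> s (sum f I) = (\<Sum>i\<in>I. s (f i))"
proof (induction I rule: infinite_finite_induct)
  case (infinite A) thus ?case using emb_zero by simp
next
  case empty thus ?case using emb_zero by simp
next
  case (insert x F)
  have "sum f F \<in> K" using insert by (intro subfield_sum[OF sfK]) auto
  thus ?case using insert emb_add by simp
qed

lemma emb_power: "x \<in> K \<Longrightarrow> s (x ^ k) = s x ^ k"
  by (induction k) (auto simp: emb_one emb_mult subfield_power[OF sfK])

lemma emb_poly:
  assumes p: "\<forall>k. coeff p k \<in> \<rat>" and x: "x \<in> K"
  shows "s (poly p x) = poly p (s x)"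
proof -
  have cK: "coeff p k * x ^ k \<in> K" for k
    using subfield_mult[OF sfK subfield_Rats[OF sfK] subfield_power[OF sfK x]] p by blast
  have "s (poly p x) = (\<Sum>k\<le>degree p. s (coeff p k * x ^ k))" unfolding poly_altdef by (rule emb_sum) (use cK in auto)
  also have "\<dots> = (\<Sum>k\<le>degree p. coeff p k * s x ^ k)"
    using emb_mult[OF subfield_Rats[OF sfK] subfield_power[OF sfK x]] p emb_rat emb_power[OF x] by simp
  finally show ?thesis unfolding poly_altdef .
qed

lemma emb_algebraic_int:
  assumes x: "x \<in> K" and ai: "algebraic_int x"
  shows "algebraic_int (s x)"
proof -
  obtain p where p: "lead_coeff p = 1" "\<forall>i. coeff p i \<in> \<int>" "poly p x = 0"
    using ai by (auto elim: algebraic_int.cases)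
  have "\<forall>k. coeff p k \<in> \<rat>" using p(2) Ints_subset_Rats by blast
  hence "poly p (s x) = 0" using emb_poly x p(3) emb_zero by metis
  thus ?thesis using p by (auto intro: algebraic_int.intros)
qed

end

context rat_basis
begin

definition mult_char_poly :: "complex \<Rightarrow> complex poly" where
  "mult_char_poly x = char_poly (mat n n (\<lambda>(i,j). mult_mat x i j))"

lemma mult_char_poly_monic: "degree (mult_char_poly x) = n \<and> coeff (mult_char_poly x) n = 1"
  unfolding mult_char_poly_def by (rule char_poly_mat_monic)

lemma mult_char_poly_nonzero: "mult_char_poly x \<noteq> 0"
  using mult_char_poly_monic[of x] by auto

lemma mult_char_poly_rat:
  assumes x: "x \<in> K" shows "coeff (mult_char_poly x) k \<in> \<rat>"
proof -
  define rq where "rq z = (SOME q. z = of_rat q)" for z :: complex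
  have rq: "of_rat (rq z) = z" if "z \<in> \<rat>" for z
    unfolding rq_def using that by (metis (mono_tags, lifting) Rats_cases someI_ex)
  define Q where "Q = mat n n (\<lambda>(i,j). rq (mult_mat x i j))"
  have "mat n n (\<lambda>(i,j). mult_mat x i j) = map_mat of_rat Q"
    unfolding Q_def by (rule eq_matI) (auto simp: rq mult_mat_rat[OF x])
  hence "mult_char_poly x = map_poly of_rat (char_poly Q)"
    unfolding mult_char_poly_def using of_rat_hom.char_poly_hom[of Q n] Q_def by simp
  thus ?thesis by (simp add: coeff_map_poly)
qed

lemma n_pos: "n > 0"
proof (rule ccontr)
  assume "\<not> n > 0"
  hence "n = 0" by simp
  obtain c where "(1::complex) = (\<Sum>i<n. c i * b i)" using bspan[OF subfield_1[OF sfK]] by blast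
  thus False using \<open>n = 0\<close> by simp
qed

lemma b_nonzero: "i < n \<Longrightarrow> b i \<noteq> 0"
proof
  assume i: "i < n" and bi: "b i = 0"
  have "(\<Sum>j<n. (if j = i then 1 else 0) * b j) = (\<Sum>j<n. if j = i then b i else 0)"
    by (rule sum.cong) auto
  also have "\<dots> = 0" using bi by simp
  finally have "\<forall>j<n. (if j = i then 1 else (0::complex)) = 0"
    by (intro bindep) auto
  thus False using i by auto
qed

lemma mult_char_poly_root: assumes x: "x \<in> K" shows "poly (mult_char_poly x) x = 0"
proof -
  have "poly (char_poly (mat n n (\<lambda>(i,j). mult_mat x j i))) x = 0"
    by (rule char_poly_root_of_eigenvector[of n _ b x 0]) (use mult_mat_eq[OF x] n_pos b_nonzero in \<open>auto simp: mult.commute\<close>)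
  moreover have "mat n n (\<lambda>(i,j). mult_mat x j i) = transpose_mat (mat n n (\<lambda>(i,j). mult_mat x i j))"
    by (rule eq_matI) auto
  ultimately show ?thesis unfolding mult_char_poly_def by (simp add: char_poly_transpose_mat[of _ n])
qed

lemma mult_char_poly_emb_root: assumes s: "s \<in> embeddings K" and x: "x \<in> K" shows "poly (mult_char_poly x) (s x) = 0"
  using emb_poly[OF sfK s _ x, of "mult_char_poly x"] mult_char_poly_rat[OF x] mult_char_poly_root[OF x] emb_zero[OF sfK s] by simp

lemma emb_coord: assumes s: "s \<in> embeddings K" and x: "x \<in> K"
  shows "s x = (\<Sum>l<n. coord x l * s (b l))"
proof -
  have c: "\<forall>l<n. coord x l \<in> \<rat>" "x = (\<Sum>l<n. coord x l * b l)" using coord_spec[OF x] by auto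
  have "s x = s (\<Sum>l<n. coord x l * b l)" using c(2) by simp
  also have "\<dots> = (\<Sum>l<n. s (coord x l * b l))"
    by (rule emb_sum[OF sfK s]) (use c(1) bK in \<open>auto intro: subfield_mult[OF sfK] Rats_in_K\<close>)
  also have "\<dots> = (\<Sum>l<n. coord x l * s (b l))"
    by (rule sum.cong[OF refl]) (use c(1) bK in \<open>simp add: emb_mult[OF sfK s] Rats_in_K emb_rat[OF sfK s]\<close>)
  finally show ?thesis .
qed

lemma finite_embeddings: "finite (embeddings K)"
proof -
  define Phi where "Phi s = restrict (\<lambda>j. s (b j)) {..<n}" for s :: "complex \<Rightarrow> complex"
  have inj: "inj_on Phi (embeddings K)"
  proof (rule inj_onI)
    fix s1 s2 assume s1: "s1 \<in> embeddings K" and s2: "s2 \<in> embeddings K" and e: "Phi s1 = Phi s2"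
    have eb: "s1 (b j) = s2 (b j)" if "j < n" for j using e that unfolding Phi_def by (metis lessThan_iff restrict_apply')
    show "s1 = s2"
    proof
      fix x show "s1 x = s2 x"
      proof (cases "x \<in> K")
        case True thus ?thesis using emb_coord[OF s1 True] emb_coord[OF s2 True] eb by simp
      next
        case False thus ?thesis using emb_out[OF sfK s1] emb_out[OF sfK s2] by simp
      qed
    qed
  qed
  have "Phi ` embeddings K \<subseteq> PiE {..<n} (\<lambda>j. {z. poly (mult_char_poly (b j)) z = 0})"
  proof
    fix t assume "t \<in> Phi ` embeddings K"
    then obtain s where s: "s \<in> embeddings K" "t = Phi s" by blast
    show "t \<in> PiE {..<n} (\<lambda>j. {z. poly (mult_char_poly (b j)) z = 0})"
      unfolding s(2) Phi_def using mult_char_poly_emb_root[OF s(1) bK] by (auto simp: PiE_iff)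
  qed
  moreover have "finite (PiE {..<n} (\<lambda>j. {z. poly (mult_char_poly (b j)) z = 0}))"
    by (intro finite_PiE poly_roots_finite mult_char_poly_nonzero) simp
  ultimately have "finite (Phi ` embeddings K)" by (rule finite_subset)
  thus ?thesis using inj finite_image_iff by blast
qed

lemma mult_char_poly_factor: "\<exists>as. mult_char_poly x = (\<Prod>a\<leftarrow>as. [:- a, 1:]) \<and> length as = n"
  unfolding mult_char_poly_def by (rule char_poly_factorized) simp

lemma mult_char_poly_root_embedding:
  assumes x: "x \<in> K" and as: "mult_char_poly x = (\<Prod>a\<leftarrow>as. [:- a, 1:])" and a: "a \<in> set as"
  shows "\<exists>s\<in>embeddings K. s x = a"
proof -
  have "poly (mult_char_poly x) a = 0" unfolding as using a
    by (induction as) (auto simp: poly_prod_list)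
  thus ?thesis using embedding_with_value[OF x] unfolding mult_char_poly_def by blast
qed

lemma mult_char_poly_int:
  assumes x: "x \<in> ring_of_integers K" shows "coeff (mult_char_poly x) k \<in> \<int>"
proof -
  have xK: "x \<in> K" and ai: "algebraic_int x" using x unfolding ring_of_integers_def by auto
  obtain as where as: "mult_char_poly x = (\<Prod>a\<leftarrow>as. [:- a, 1:])" using mult_char_poly_factor by blast
  have "\<forall>a\<in>set as. algebraic_int a"
    using mult_char_poly_root_embedding[OF xK as] emb_algebraic_int[OF sfK _ xK ai] by blast
  hence "algebraic_int (coeff (mult_char_poly x) k)" unfolding as by (rule algebraic_int_coeff_prod_linear)
  thus ?thesis using mult_char_poly_rat[OF xK] rational_algebraic_int_is_int by blast
qed

end

section \<open>Finiteness of the cube classes of units\<close>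

lemma coeff_prod_linear_bound:
  assumes "\<forall>a\<in>set as. cmod a \<le> C" "C \<ge> 0"
  shows "cmod (coeff (\<Prod>a\<leftarrow>as. [:- a, 1:]) k) \<le> (1 + C) ^ length as"
  using assms
proof (induction as arbitrary: k)
  case Nil thus ?case by (cases k) auto
next
  case (Cons a as)
  define P where "P = (\<Prod>a\<leftarrow>as. [:- a, 1:])"
  have IH: "cmod (coeff P j) \<le> (1 + C) ^ length as" for j unfolding P_def using Cons by simp
  have eq: "(\<Prod>a\<leftarrow>a # as. [:- a, 1:]) = pCons 0 P - Polynomial.smult a P"
    unfolding P_def by (simp add: mult_pCons_left pCons_one)
  have c: "coeff (pCons 0 P - Polynomial.smult a P) k = (case k of 0 \<Rightarrow> 0 | Suc j \<Rightarrow> coeff P j) - a * coeff P k"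
    by (cases k) auto
  have b1: "cmod (case k of 0 \<Rightarrow> 0 | Suc j \<Rightarrow> coeff P j) \<le> (1 + C) ^ length as"
    using IH by (cases k) (auto intro: order.trans[OF _ IH] simp: zero_le_power Cons.prems)
  have b2: "cmod (a * coeff P k) \<le> C * (1 + C) ^ length as"
    unfolding norm_mult using Cons.prems IH by (intro mult_mono) auto
  have "cmod (coeff (\<Prod>a\<leftarrow>a # as. [:- a, 1:]) k) \<le> (1 + C) ^ length as + C * (1 + C) ^ length as"
    unfolding eq c by (rule order.trans[OF norm_triangle_ineq4]) (use b1 b2 in simp)
  also have "\<dots> = (1 + C) ^ length (a # as)" by (simp add: algebra_simps)
  finally show ?case .
qed

lemma finite_bounded_ints: "finite {z::complex. z \<in> \<int> \<and> cmod z \<le> D}"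
proof -
  have "{z::complex. z \<in> \<int> \<and> cmod z \<le> D} \<subseteq> of_int ` {-\<lceil>D\<rceil>..\<lceil>D\<rceil>}"
  proof
    fix z :: complex assume z: "z \<in> {z. z \<in> \<int> \<and> cmod z \<le> D}"
    then obtain k where k: "z = of_int k" by (auto elim: Ints_cases)
    have "\<bar>real_of_int k\<bar> \<le> D" using z k by (simp add: norm_of_int)
    hence "k \<in> {-\<lceil>D\<rceil>..\<lceil>D\<rceil>}" by (simp add: abs_le_iff) linarith
    thus "z \<in> of_int ` {-\<lceil>D\<rceil>..\<lceil>D\<rceil>}" using k by blast
  qed
  thus ?thesis by (rule finite_subset) simp
qed

lemma finite_bounded_int_polys:
  "finite {p :: complex poly. degree p = n \<and> coeff p n = 1 \<and> (\<forall>k. coeff p k \<in> \<int> \<and> cmod (coeff p k) \<le> D)}"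
  (is "finite ?P")
proof -
  define Phi where "Phi p = restrict (coeff p) {..n}" for p :: "complex poly"
  have inj: "inj_on Phi ?P"
  proof (rule inj_onI)
    fix p q assume p: "p \<in> ?P" and q: "q \<in> ?P" and e: "Phi p = Phi q"
    show "p = q"
    proof (rule poly_eqI)
      fix k show "coeff p k = coeff q k"
      proof (cases "k \<le> n")
        case True thus ?thesis using e unfolding Phi_def by (metis atMost_iff restrict_apply')
      next
        case False thus ?thesis using p q by (simp add: coeff_eq_0)
      qed
    qed
  qed
  have "Phi ` ?P \<subseteq> PiE {..n} (\<lambda>_. {z::complex. z \<in> \<int> \<and> cmod z \<le> D})"
  proof
    fix t assume "t \<in> Phi ` ?P"
    then obtain p where p: "p \<in> ?P" "t = Phi p" by blast
    show "t \<in> PiE {..n} (\<lambda>_. {z::complex. z \<in> \<int> \<and> cmod z \<le> D})"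
      unfolding p(2) Phi_def using p(1) by (auto simp: PiE_iff)
  qed
  moreover have "finite (PiE {..n} (\<lambda>_. {z::complex. z \<in> \<int> \<and> cmod z \<le> D}))"
    by (intro finite_PiE finite_bounded_ints) simp
  ultimately have "finite (Phi ` ?P)" by (rule finite_subset)
  thus ?thesis using inj finite_image_iff by blast
qed

context rat_basis
begin

lemma finite_bounded_integers: "finite {x \<in> ring_of_integers K. \<forall>s\<in>embeddings K. cmod (s x) \<le> C}"
proof -
  define C' where "C' = max C 0"
  define D where "D = (1 + C') ^ n"
  let ?P = "{p :: complex poly. degree p = n \<and> coeff p n = 1 \<and> (\<forall>k. coeff p k \<in> \<int> \<and> cmod (coeff p k) \<le> D)}"
  have sub: "{x \<in> ring_of_integers K. \<forall>s\<in>embeddings K. cmod (s x) \<le> C} \<subseteq> (\<Union>p\<in>?P. {z. poly p z = 0})"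
  proof
    fix x assume x: "x \<in> {x \<in> ring_of_integers K. \<forall>s\<in>embeddings K. cmod (s x) \<le> C}"
    hence xR: "x \<in> ring_of_integers K" and xb: "\<forall>s\<in>embeddings K. cmod (s x) \<le> C" by auto
    have xK: "x \<in> K" using xR unfolding ring_of_integers_def by auto
    obtain as where as: "mult_char_poly x = (\<Prod>a\<leftarrow>as. [:- a, 1:])" "length as = n" using mult_char_poly_factor by blast
    have "\<forall>a\<in>set as. cmod a \<le> C'"
    proof
      fix a assume "a \<in> set as"
      then obtain s where "s \<in> embeddings K" "s x = a" using mult_char_poly_root_embedding[OF xK as(1)] by blast
      thus "cmod a \<le> C'" using xb unfolding C'_def by force
    qed
    hence "cmod (coeff (mult_char_poly x) k) \<le> D" for k
      unfolding as(1) D_def using coeff_prod_linear_bound[of as C' k] as(2) unfolding C'_def by simp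
    hence "mult_char_poly x \<in> ?P" using mult_char_poly_monic[of x] mult_char_poly_int[OF xR] by blast
    moreover have "poly (mult_char_poly x) x = 0" by (rule mult_char_poly_root[OF xK])
    ultimately show "x \<in> (\<Union>p\<in>?P. {z. poly p z = 0})" by blast
  qed
  have "finite (\<Union>p\<in>?P. {z. poly p z = 0})"
  proof (rule finite_UN_I)
    show "finite ?P" by (rule finite_bounded_int_polys)
    fix p assume "p \<in> ?P"
    hence "p \<noteq> 0" by auto
    thus "finite {z. poly p z = 0}" by (rule poly_roots_finite)
  qed
  thus ?thesis using sub finite_subset by blast
qed

end

lemma sum_apply_fun: "(\<Sum>i\<in>A. f i) x = (\<Sum>i\<in>A. f i x)"
  by (induction A rule: infinite_finite_induct) auto

interpretation fun_vs: vector_space "\<lambda>(c::real) (f :: (complex \<Rightarrow> complex) \<Rightarrow> real). (\<lambda>s. c * f s)"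
  by unfold_locales (auto simp: fun_eq_iff algebra_simps)

context rat_basis
begin

definition log_vec :: "complex \<Rightarrow> (complex \<Rightarrow> complex) \<Rightarrow> real" where
  "log_vec u = (\<lambda>s. if s \<in> embeddings K then ln (cmod (s u)) else 0)"

abbreviation UR where "UR \<equiv> units_of_set (ring_of_integers K)"

lemma R_unit_in_K: "u \<in> UR \<Longrightarrow> u \<in> K \<and> u \<noteq> 0"
  unfolding units_of_set_def ring_of_integers_def by auto

lemma mult_group_R_units: "mult_group UR" by (rule mult_group_units[OF subring_ring_of_integers[OF sfK]])

lemma emb_unit_nonzero: "u \<in> UR \<Longrightarrow> s \<in> embeddings K \<Longrightarrow> s u \<noteq> 0"
  using emb_nonzero[OF sfK] R_unit_in_K by blast

lemma log_vec_mult: assumes u: "u \<in> UR" and w: "w \<in> UR" shows "log_vec (u * w) = (\<lambda>s. log_vec u s + log_vec w s)"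
proof
  fix s show "log_vec (u * w) s = log_vec u s + log_vec w s"
  proof (cases "s \<in> embeddings K")
    case True
    have "s (u * w) = s u * s w" using emb_mult[OF sfK True] R_unit_in_K u w by blast
    thus ?thesis unfolding log_vec_def using True emb_unit_nonzero[OF u True] emb_unit_nonzero[OF w True]
      by (simp add: norm_mult ln_mult)
  qed (simp add: log_vec_def)
qed

lemma log_vec_one: "log_vec 1 = (\<lambda>s. 0)"
  unfolding log_vec_def by (rule ext) (simp add: emb_one[OF sfK])

lemma log_vec_power: assumes u: "u \<in> UR" shows "log_vec (u ^ m) = (\<lambda>s. real m * log_vec u s)"
proof (induction m)
  case 0 thus ?case using log_vec_one by simp
next
  case (Suc m)
  have "log_vec (u ^ Suc m) = log_vec (u * u ^ m)" by simp
  also have "\<dots> = (\<lambda>s. log_vec u s + log_vec (u ^ m) s)" by (rule log_vec_mult[OF u mult_group_power[OF mult_group_R_units u]])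
  finally show ?case using Suc by (simp add: algebra_simps)
qed

lemma log_vec_inverse: assumes u: "u \<in> UR" shows "log_vec (inverse u) = (\<lambda>s. - log_vec u s)"
proof -
  have iu: "inverse u \<in> UR" using mult_group_R_units u unfolding mult_group_def by blast
  have "log_vec (u * inverse u) = (\<lambda>s. log_vec u s + log_vec (inverse u) s)" by (rule log_vec_mult[OF u iu])
  moreover have "u * inverse u = 1" using R_unit_in_K[OF u] by simp
  ultimately have "(\<lambda>s. log_vec u s + log_vec (inverse u) s) = (\<lambda>s. 0)" using log_vec_one by simp
  thus ?thesis by (auto simp: fun_eq_iff add_eq_0_iff2)
qed

lemma log_vec_prod: "finite A \<Longrightarrow> (\<And>v. v \<in> A \<Longrightarrow> z v \<in> UR) \<Longrightarrow>
   (\<Prod>v\<in>A. z v) \<in> UR \<and> log_vec (\<Prod>v\<in>A. z v) = (\<lambda>s. \<Sum>v\<in>A. log_vec (z v) s)"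
proof (induction A rule: finite_induct)
  case empty thus ?case using log_vec_one mult_group_R_units unfolding mult_group_def by simp
next
  case (insert x F)
  hence IH: "(\<Prod>v\<in>F. z v) \<in> UR" "log_vec (\<Prod>v\<in>F. z v) = (\<lambda>s. \<Sum>v\<in>F. log_vec (z v) s)" by auto
  have zx: "z x \<in> UR" using insert by simp
  have "(\<Prod>v\<in>insert x F. z v) = z x * (\<Prod>v\<in>F. z v)" using insert by simp
  moreover have "z x * (\<Prod>v\<in>F. z v) \<in> UR" using mult_group_R_units zx IH(1) unfolding mult_group_def by blast
  moreover have "log_vec (z x * (\<Prod>v\<in>F. z v)) = (\<lambda>s. \<Sum>v\<in>insert x F. log_vec (z v) s)"
    using log_vec_mult[OF zx IH(1)] IH(2) insert by simp
  ultimately show ?case by simp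
qed

lemma log_vec_bound_exp: assumes u: "u \<in> UR" and s: "s \<in> embeddings K" and b: "log_vec u s \<le> D"
  shows "cmod (s u) \<le> exp D"
proof -
  have pos: "cmod (s u) > 0" using emb_unit_nonzero[OF u s] by simp
  have "cmod (s u) = exp (log_vec u s)" unfolding log_vec_def using s pos by simp
  thus ?thesis using b by simp
qed

lemma log_vec_in_span: "log_vec u \<in> fun_vs.span ((\<lambda>t s. if s = t then 1 else 0) ` embeddings K)"
proof -
  have "log_vec u = (\<Sum>t\<in>embeddings K. (\<lambda>s. log_vec u t * (if s = t then 1 else 0)))"
  proof
    fix s
    show "log_vec u s = (\<Sum>t\<in>embeddings K. (\<lambda>s. log_vec u t * (if s = t then 1 else 0))) s"
      unfolding sum_apply_fun log_vec_def
      by (cases "s \<in> embeddings K") (auto simp: finite_embeddings if_distrib cong: if_cong intro!: sum.neutral)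
  qed
  also have "\<dots> \<in> fun_vs.span ((\<lambda>t s. if s = t then 1 else 0) ` embeddings K)"
    by (intro fun_vs.span_sum fun_vs.span_scale fun_vs.span_base) auto
  finally show ?thesis .
qed

lemma finite_independent_log_vecs:
  assumes "fun_vs.independent B" "B \<subseteq> log_vec ` UNIV"
  shows "finite B"
  using fun_vs.independent_span_bound[OF finite_imageI[OF finite_embeddings] assms(1)] assms(2) log_vec_in_span
  by blast

lemma ex_unit_log_vec_int_combination:
  assumes B: "finite B" "B \<subseteq> log_vec ` UR"
  shows "\<exists>z\<in>UR. log_vec z = (\<lambda>s. \<Sum>v\<in>B. of_int (k v) * v s)"
proof -
  define e where "e v = inv_into UR log_vec v" for v
  have e: "e v \<in> UR" "log_vec (e v) = v" if "v \<in> B" for v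
    using B(2) that unfolding e_def by (auto intro: inv_into_into f_inv_into_f)
  define z where "z v = (if k v \<ge> 0 then e v ^ nat (k v) else inverse (e v) ^ nat (- k v))" for v
  have z: "z v \<in> UR \<and> log_vec (z v) = (\<lambda>s. of_int (k v) * v s)" if v: "v \<in> B" for v
  proof (cases "k v \<ge> 0")
    case True
    then show ?thesis unfolding z_def using e[OF v] log_vec_power mult_group_power[OF mult_group_R_units] by simp
  next
    case False
    have ie: "inverse (e v) \<in> UR" using mult_group_inverse[OF mult_group_R_units e(1)[OF v]] .
    have "log_vec (inverse (e v) ^ nat (- k v)) = (\<lambda>s. real (nat (- k v)) * - v s)"
      using log_vec_power[OF ie] log_vec_inverse e[OF v] by simp
    also have "\<dots> = (\<lambda>s. of_int (k v) * v s)" using False by (auto simp: fun_eq_iff)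
    finally show ?thesis unfolding z_def using False mult_group_power[OF mult_group_R_units ie] by simp
  qed
  have "(\<Prod>v\<in>B. z v) \<in> UR \<and> log_vec (\<Prod>v\<in>B. z v) = (\<lambda>s. \<Sum>v\<in>B. log_vec (z v) s)"
    by (rule log_vec_prod[OF B(1)]) (use z in blast)
  moreover have "(\<lambda>s. \<Sum>v\<in>B. log_vec (z v) s) = (\<lambda>s. \<Sum>v\<in>B. of_int (k v) * v s)"
    using z by (simp cong: sum.cong)
  ultimately show ?thesis by auto
qed

text \<open>Modulo cubes, the coordinates of \<open>log_vec u\<close> with respect to a basis \<open>B\<close> of the span of
  the unit logarithms can be reduced into \<open>[0, 3)\<close>.\<close>

lemma cube_coset_bounded_representative:
  assumes B: "finite B" "B \<subseteq> log_vec ` UR" "log_vec ` UR \<subseteq> fun_vs.span B" and u: "u \<in> UR"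
  shows "\<exists>u'\<in>UR. (\<forall>s\<in>embeddings K. cmod (s u') \<le> exp (3 * (\<Sum>v\<in>B. \<Sum>t\<in>embeddings K. \<bar>v t\<bar>)))
    \<and> cube_coset UR u = cube_coset UR u'"
proof -
  have "log_vec u \<in> fun_vs.span B" using B(3) u by blast
  then obtain c where c: "log_vec u = (\<Sum>v\<in>B. (\<lambda>s. c v * v s))"
    using fun_vs.span_finite[OF B(1)] by auto
  define k where "k v = \<lfloor>c v / 3\<rfloor>" for v
  obtain z where z: "z \<in> UR" "log_vec z = (\<lambda>s. \<Sum>v\<in>B. of_int (k v) * v s)"
    using ex_unit_log_vec_int_combination[OF B(1,2)] by blast
  have iz: "inverse z \<in> UR" using mult_group_inverse[OF mult_group_R_units z(1)] .
  define u' where "u' = u * inverse z ^ 3"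
  have u': "u' \<in> UR" unfolding u'_def using u iz by (intro mult_group_mult mult_group_power mult_group_R_units)
  have log_u': "log_vec u' s = (\<Sum>v\<in>B. (c v - 3 * of_int (k v)) * v s)" for s
  proof -
    have "log_vec u' s = log_vec u s - 3 * log_vec z s"
      unfolding u'_def log_vec_mult[OF u mult_group_power[OF mult_group_R_units iz]]
      using log_vec_power[OF iz, of 3] log_vec_inverse[OF z(1)] by simp
    also have "\<dots> = (\<Sum>v\<in>B. (c v - 3 * of_int (k v)) * v s)"
      unfolding c z(2) sum_apply_fun by (simp add: sum_distrib_left sum_subtractf algebra_simps)
    finally show ?thesis .
  qed
  have "cmod (s u') \<le> exp (3 * (\<Sum>v\<in>B. \<Sum>t\<in>embeddings K. \<bar>v t\<bar>))" if s: "s \<in> embeddings K" for s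
  proof (rule log_vec_bound_exp[OF u' s])
    have "log_vec u' s \<le> (\<Sum>v\<in>B. \<bar>(c v - 3 * of_int (k v)) * v s\<bar>)"
      unfolding log_u' by (rule order.trans[OF abs_ge_self sum_abs])
    also have "\<dots> \<le> (\<Sum>v\<in>B. 3 * (\<Sum>t\<in>embeddings K. \<bar>v t\<bar>))"
    proof (rule sum_mono)
      fix v
      have "0 \<le> c v - 3 * of_int (k v)" "c v - 3 * of_int (k v) \<le> 3"
        unfolding k_def by linarith+
      moreover have "\<bar>v s\<bar> \<le> (\<Sum>t\<in>embeddings K. \<bar>v t\<bar>)"
        using member_le_sum[OF s _ finite_embeddings, of "\<lambda>t. \<bar>v t\<bar>"] by simp
      ultimately show "\<bar>(c v - 3 * of_int (k v)) * v s\<bar> \<le> 3 * (\<Sum>t\<in>embeddings K. \<bar>v t\<bar>)"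
        unfolding abs_mult by (intro mult_mono) auto
    qed
    finally show "log_vec u' s \<le> 3 * (\<Sum>v\<in>B. \<Sum>t\<in>embeddings K. \<bar>v t\<bar>)"
      by (simp add: sum_distrib_left)
  qed
  moreover have "u = u' * z ^ 3"
    unfolding u'_def using R_unit_in_K[OF z(1)] by (simp add: power_inverse field_simps)
  then have "cube_coset UR u = cube_coset UR u'"
    using cube_coset_eq_iff[OF mult_group_R_units u u'] z(1) by blast
  ultimately show ?thesis using u' by blast
qed

lemma finite_quot_cubes_R_units: "finite (quot UR (cubes UR))"
proof -
  obtain B where B: "B \<subseteq> log_vec ` UR" "fun_vs.independent B" "log_vec ` UR \<subseteq> fun_vs.span B"
    using fun_vs.maximal_independent_subset[of "log_vec ` UR"] by blast
  have "finite B" using finite_independent_log_vecs[OF B(2)] B(1) by blast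
  define F where "F = {x \<in> ring_of_integers K.
    \<forall>s\<in>embeddings K. cmod (s x) \<le> exp (3 * (\<Sum>v\<in>B. \<Sum>t\<in>embeddings K. \<bar>v t\<bar>))}"
  have "quot UR (cubes UR) \<subseteq> cube_coset UR ` (F \<inter> UR)"
    unfolding quot_cubes_eq_image F_def
    using cube_coset_bounded_representative[OF \<open>finite B\<close> B(1,3)] units_of_set_def by fastforce
  moreover have "finite F" unfolding F_def by (rule finite_bounded_integers)
  ultimately show ?thesis by (meson finite_Int finite_imageI finite_subset)
qed

end

lemma number_field_finite_quot_cubes_units:
  assumes "number_field K"
  shows "finite (quot (units_of_set (ring_of_integers K)) (cubes (units_of_set (ring_of_integers K))))"
proof -
  obtain b n where "rat_basis K b n" using number_field_rat_basis[OF assms] by blast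
  then interpret rat_basis K b n .
  show ?thesis by (rule finite_quot_cubes_R_units)
qed

context quadratic_ext
begin

lemma rel_norm_order_unit:
  assumes S: "is_order (ring_of_integers K) L S" and u: "u \<in> units_of_set S"
  shows "rel_norm K L u \<in> units_of_set (ring_of_integers K)"
proof -
  have SL: "S \<subseteq> L" and srS: "is_subring S" using S unfolding is_order_def by auto
  have norm_in_R: "rel_norm K L v \<in> ring_of_integers K" if "v \<in> S" for v
    using that SL rel_norm_in_base rel_norm_algebraic_int order_algebraic_int[OF S]
    unfolding ring_of_integers_def by blast
  have u': "u \<in> S" "inverse u \<in> S" "u \<noteq> 0" using u unfolding units_of_set_def by auto
  have "rel_norm K L u * rel_norm K L (inverse u) = 1"
    using rel_norm_mult[of u "inverse u"] u' SL rel_norm_one by auto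
  then have "rel_norm K L u \<noteq> 0" "inverse (rel_norm K L u) = rel_norm K L (inverse u)"
    by (auto intro: inverse_unique)
  then show ?thesis unfolding units_of_set_def using norm_in_R u' by auto
qed

lemma norm_map_order_units:
  assumes S: "is_order (ring_of_integers K) L S"
  shows "norm_map (units_of_set S) (units_of_set (ring_of_integers K)) (rel_norm K L)"
proof
  have srS: "is_subring S" and SL: "S \<subseteq> L" and RS: "ring_of_integers K \<subseteq> S"
    using S unfolding is_order_def by auto
  show "mult_group (units_of_set S)" by (rule mult_group_units[OF srS])
  show "mult_group (units_of_set (ring_of_integers K))"
    by (rule mult_group_units[OF subring_ring_of_integers[OF sfK]])
  show "units_of_set (ring_of_integers K) \<subseteq> units_of_set S"
    using RS unfolding units_of_set_def by auto
  show "rel_norm K L (x * y) = rel_norm K L x * rel_norm K L y"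
    if "x \<in> units_of_set S" "y \<in> units_of_set S" for x y
    using that SL rel_norm_mult unfolding units_of_set_def by auto
  show "rel_norm K L x \<in> units_of_set (ring_of_integers K)" if "x \<in> units_of_set S" for x
    by (rule rel_norm_order_unit[OF S that])
  show "rel_norm K L h = h ^ 2" if "h \<in> units_of_set (ring_of_integers K)" for h
    using that rel_norm_of_base unfolding units_of_set_def ring_of_integers_def by auto
qed

end

theorem mainTheorem5:
  fixes K L S :: "complex set"
  assumes "number_field K"
    and "quadratic_extension K L"
    and "is_order (ring_of_integers K) L S"
  shows "real (card (quot {u \<in> units_of_set S. rel_norm K L u = 1}
                          (cubes {u \<in> units_of_set S. rel_norm K L u = 1})))
       = real (card (quot (units_of_set S) (cubes (units_of_set S))))
         / real (card (quot (units_of_set (ring_of_integers K))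
                            (cubes (units_of_set (ring_of_integers K)))))"
proof -
  have sfK: "is_subfield K" using assms(1) number_field_subfield by blast
  interpret quadratic_ext K L
    using assms(2) sfK unfolding quadratic_extension_def by unfold_locales auto
  interpret norm_map "units_of_set S" "units_of_set (ring_of_integers K)" "rel_norm K L"
    by (rule norm_map_order_units[OF assms(3)])
  have "quot (units_of_set (ring_of_integers K)) (cubes (units_of_set (ring_of_integers K))) \<noteq> {}"
    unfolding quot_cubes_eq_image using mult_group_one[OF H] by blast
  then have "card (quot (units_of_set (ring_of_integers K)) (cubes (units_of_set (ring_of_integers K)))) > 0"
    using number_field_finite_quot_cubes_units[OF assms(1)] by (simp add: card_gt_0_iff)
  then show ?thesis using card_quot_cubes unfolding kernel_def by (simp add: field_simps)
qed

end
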